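(* Let $(G,S)$ be a Coxeter system, where $G$ is infinite and $S=\{s_0,s_1,\dots,s_k\}$. Suppose that for some $l\le k$ the group $G_l=\langle s_0,\dots,s_l\rangle$ (with generating set $\{s_0,\dots,s_l\}$) is infinite and indecomposable, and let $m$ be a positive integer with $m\le k$. Then the subgroup $H=\langle s_m,\dots,s_k\rangle$ has infinite index in $G$.
   Context: A Coxeter system $(G,S)$ consists of a finite set $S$ and a group $G$ with presentation $\langle S \mid (s_is_j)^{m_{ij}}=1\rangle$, $m_{ii}=1$, $m_{ij}\in\{2,3,\dots,\infty\}$ for $i\ne j$. For a subset $T\subseteq S$, the subgroup generated by $T$ is again a Coxeter group with generating set $T$. A Coxeter group with fixed generating set $T$ is decomposable if $T=T_1\cup T_2$ with $T_1,T_2$ nonempty and every element of $T_1$ commuting with every element of $T_2$; otherwise it is indecomposable. *)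

theory Defs
  imports "HOL-Algebra.Algebra" "HOL-Library.Extended_Nat"
begin

text \<open>Coxeter matrix on a finite index set S of generators (indices are naturals).
  The entry M i j = \<infinity> means that there is no relation between s_i and s_j.\<close>
definition coxeter_matrix :: "(nat \<Rightarrow> nat \<Rightarrow> enat) \<Rightarrow> nat set \<Rightarrow> bool" where
  "coxeter_matrix M S \<longleftrightarrow> finite S \<and> (\<forall>i\<in>S. M i i = 1) \<and>
     (\<forall>i\<in>S. \<forall>j\<in>S. i \<noteq> j \<longrightarrow> M i j = M j i \<and> M i j \<ge> 2)"

fun alt :: "nat \<Rightarrow> nat \<Rightarrow> nat \<Rightarrow> nat list" where
  "alt i j 0 = []"
| "alt i j (Suc n) = i # alt j i n"

definition cox_step :: "(nat \<Rightarrow> nat \<Rightarrow> enat) \<Rightarrow> nat set \<Rightarrow> (nat list \<times> nat list) set" where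
  "cox_step M S = {(x @ alt i j (2 * n) @ y, x @ y) | x y i j n.
      i \<in> S \<and> j \<in> S \<and> M i j = enat n}"

text \<open>Equality in the Coxeter group of words over S: the congruence generated by the relators
  in the free monoid on S (since all generators are involutions this is the group presentation).\<close>
definition cox_rel :: "(nat \<Rightarrow> nat \<Rightarrow> enat) \<Rightarrow> nat set \<Rightarrow> (nat list \<times> nat list) set" where
  "cox_rel M S = ((cox_step M S \<union> (cox_step M S)\<inverse>)\<^sup>*) \<inter> (lists S \<times> lists S)"

definition coxeter_group :: "(nat \<Rightarrow> nat \<Rightarrow> enat) \<Rightarrow> nat set \<Rightarrow> nat list set monoid" where
  "coxeter_group M S =
     \<lparr> carrier = lists S // cox_rel M S,
       monoid.mult = (\<lambda>A B. cox_rel M S `` {(SOME u. u \<in> A) @ (SOME v. v \<in> B)}),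
       monoid.one = cox_rel M S `` {[]} \<rparr>"

definition cox_gen :: "(nat \<Rightarrow> nat \<Rightarrow> enat) \<Rightarrow> nat set \<Rightarrow> nat \<Rightarrow> nat list set" where
  "cox_gen M S i = cox_rel M S `` {[i]}"

definition cox_decomposable :: "(nat \<Rightarrow> nat \<Rightarrow> enat) \<Rightarrow> nat set \<Rightarrow> nat set \<Rightarrow> bool" where
  "cox_decomposable M S T \<longleftrightarrow> (\<exists>T1 T2. T1 \<union> T2 = T \<and> T1 \<inter> T2 = {} \<and> T1 \<noteq> {} \<and> T2 \<noteq> {} \<and>
     (\<forall>a\<in>T1. \<forall>b\<in>T2. cox_gen M S a \<otimes>\<^bsub>coxeter_group M S\<^esub> cox_gen M S b
                     = cox_gen M S b \<otimes>\<^bsub>coxeter_group M S\<^esub> cox_gen M S a))"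

end

theory Submission
  imports Defs
begin

text \<open>Tits' parity
  count of how often a reflection occurs among the reflections \<open>s\<^sub>1\<cdots>s\<^sub>p\<cdots>s\<^sub>1\<close> of a word is
  invariant under the relations; it gives the exchange and deletion conditions. Together with the
  Tits representation, which separates a generator from the parabolic subgroup of the others, this
  shows that reduced words for elements of \<open>W\<^sub>A\<close> only use letters of \<open>A\<close>, hence
  \<open>W\<^sub>A \<inter> W\<^sub>B = W\<^bsub>A \<inter> B\<^esub>\<close>, and Kilmoyer's lemma: for \<open>s \<notin> A\<close>, \<open>W\<^sub>A \<inter> s W\<^sub>A s\<close> is the
  parabolic subgroup of the generators in \<open>A\<close> commuting with \<open>s\<close>. From these, induction on \<open>|I|\<close>
  shows that if \<open>W\<^sub>J\<close> has finite index in \<open>W\<^sub>I\<close>, then every irreducible \<open>K \<subseteq> I\<close> with \<open>W\<^sub>K\<close>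
  infinite lies in \<open>J\<close>. For \<open>I = S\<close>, \<open>J = {m..k}\<close> and \<open>K = {0..l}\<close> this is impossible.\<close>

lemma rev_in_lists_iff [simp]: "rev w \<in> lists A \<longleftrightarrow> w \<in> lists A"
  by auto

lemma set_alt: "set (alt i j n) \<subseteq> {i, j}"
  by (induction n arbitrary: i j) auto

lemma length_alt: "length (alt i j n) = n"
  by (induction n arbitrary: i j) auto

lemma alt_even_append: "alt i j (2 * a + b) = alt i j (2 * a) @ alt i j b"
  by (induction a arbitrary: i j) (auto simp: numeral_2_eq_2)

lemma rev_alt_even: "rev (alt i j (2 * n)) = alt j i (2 * n)"
proof (induction n arbitrary: i j)
  case (Suc n)
  have "alt i j (2 * Suc n) = alt i j (2 * n) @ [i, j]"
    using alt_even_append[of i j n 2] by (simp add: numeral_2_eq_2)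
  moreover have "alt j i (2 * Suc n) = [j, i] @ alt j i (2 * n)"
    by (simp add: numeral_2_eq_2)
  ultimately show ?case using Suc by simp
qed simp

lemma take_alt: "q \<le> N \<Longrightarrow> take q (alt i j N) = alt i j q"
proof (induction q arbitrary: i j N)
  case (Suc q)
  then obtain N' where "N = Suc N'" by (cases N) auto
  then show ?case using Suc by simp
qed simp

lemma alt_Suc_snoc: "alt i j (Suc N) = alt i j N @ [if even N then i else j]"
  by (induction N arbitrary: i j) auto

lemma alt_palindrome: "alt i j (Suc q) @ rev (alt i j q) = alt i j (Suc (2 * q))"
proof (induction q arbitrary: i j)
  case (Suc q)
  have "alt i j (Suc (Suc q)) @ rev (alt i j (Suc q)) = i # (alt j i (Suc q) @ rev (alt j i q)) @ [i]"
    by simp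
  also have "\<dots> = i # alt j i (Suc (2 * q)) @ [i]" using Suc by simp
  also have "\<dots> = i # alt j i (Suc (Suc (2 * q)))" using alt_Suc_snoc[of j i "Suc (2 * q)"] by simp
  finally show ?case by simp
qed simp

lemma card_less_add_split:
  fixes a b :: nat
  shows "card {p. p < a + b \<and> P p} = card {p. p < a \<and> P p} + card {q. q < b \<and> P (a + q)}"
proof -
  have "{p. p < a + b \<and> P p} = {p. p < a \<and> P p} \<union> (+) a ` {q. q < b \<and> P (a + q)}"
  proof (intro equalityI subsetI)
    fix p assume "p \<in> {p. p < a + b \<and> P p}"
    then show "p \<in> {p. p < a \<and> P p} \<union> (+) a ` {q. q < b \<and> P (a + q)}"
      by (cases "p < a") (auto simp: image_iff intro!: exI[of _ "p - a"])
  qed auto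
  moreover have "{p. p < a \<and> P p} \<inter> (+) a ` {q. q < b \<and> P (a + q)} = {}" by auto
  ultimately show ?thesis by (simp add: card_Un_disjoint card_image)
qed

lemma finite_image_if_factors:
  assumes fin: "finite (f ` A)" and factors: "\<And>x y. x \<in> A \<Longrightarrow> y \<in> A \<Longrightarrow> f x = f y \<Longrightarrow> g x = g y"
  shows "finite (g ` A)"
proof -
  define r where "r c = (SOME x. x \<in> A \<and> f x = c)" for c
  have "g ` A \<subseteq> (g \<circ> r) ` f ` A"
  proof
    fix z assume "z \<in> g ` A"
    then obtain x where x: "x \<in> A" "z = g x" by blast
    have "r (f x) \<in> A \<and> f (r (f x)) = f x"
      unfolding r_def by (rule someI[of _ x]) (use x in simp)
    then have "z = (g \<circ> r) (f x)" using factors[of "r (f x)" x] x by simp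
    then show "z \<in> (g \<circ> r) ` f ` A" using x by blast
  qed
  moreover have "finite ((g \<circ> r) ` f ` A)" using fin by (rule finite_imageI)
  ultimately show ?thesis by (rule finite_subset)
qed

lemma cos_recurrence_closed_form:
  fixes x :: "nat \<Rightarrow> real"
  assumes rec: "\<And>r. x (Suc (Suc r)) = 2 * cos \<theta> * x (Suc r) - x r"
  shows "x r * sin \<theta> = sin (real r * \<theta>) * x 1 - sin ((real r - 1) * \<theta>) * x 0"
proof -
  have sin_rec: "sin (y + \<theta>) = 2 * cos \<theta> * sin y - sin (y - \<theta>)" for y
    by (simp add: sin_add sin_diff algebra_simps)
  have "x r * sin \<theta> = sin (real r * \<theta>) * x 1 - sin ((real r - 1) * \<theta>) * x 0 \<and>
        x (Suc r) * sin \<theta> = sin (real (Suc r) * \<theta>) * x 1 - sin (real r * \<theta>) * x 0"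
  proof (induction r)
    case (Suc r)
    let ?a = "real (Suc r) * \<theta>" and ?b = "real r * \<theta>"
    have "real (Suc (Suc r)) * \<theta> = ?a + \<theta>" "?b = ?a - \<theta>" "?a = ?b + \<theta>"
      "(real r - 1) * \<theta> = ?b - \<theta>"
      by (simp_all add: algebra_simps)
    then have id1: "sin (real (Suc (Suc r)) * \<theta>) = 2 * cos \<theta> * sin ?a - sin ?b"
      and id2: "sin ?a = 2 * cos \<theta> * sin ?b - sin ((real r - 1) * \<theta>)"
      using sin_rec[of ?a] sin_rec[of ?b] by simp_all
    from Suc have ih: "x r * sin \<theta> = sin ?b * x 1 - sin ((real r - 1) * \<theta>) * x 0"
      "x (Suc r) * sin \<theta> = sin ?a * x 1 - sin ?b * x 0"
      by blast+
    have "x (Suc (Suc r)) * sin \<theta> = 2 * cos \<theta> * (x (Suc r) * sin \<theta>) - x r * sin \<theta>"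
      by (simp add: rec algebra_simps)
    also have "\<dots> = (2 * cos \<theta> * sin ?a - sin ?b) * x 1
        - (2 * cos \<theta> * sin ?b - sin ((real r - 1) * \<theta>)) * x 0"
      unfolding ih by (simp add: algebra_simps)
    finally show ?case using ih(2) id1 id2 by simp
  qed simp
  then show ?thesis by simp
qed

lemma cos_recurrence_periodic:
  fixes x :: "nat \<Rightarrow> real"
  assumes n: "n \<ge> 3"
    and rec: "\<And>r. x (Suc (Suc r)) = 2 * cos (2 * pi / n) * x (Suc r) - x r"
  shows "x n = x 0"
proof -
  let ?t = "2 * pi / n"
  have "sin ?t > 0" using n by (intro sin_gt_zero) (simp_all add: field_simps)
  moreover have "x n * sin ?t = sin (real n * ?t) * x 1 - sin ((real n - 1) * ?t) * x 0"
    using cos_recurrence_closed_form[of x ?t n] rec by simp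
  moreover have "real n * ?t = 2 * pi" "(real n - 1) * ?t = 2 * pi - ?t"
    using n by (simp_all add: field_simps)
  ultimately show ?thesis by (simp add: sin_diff)
qed

text \<open>In the Tits representation \<open>P r = B(e\<^sub>i, v\<^sub>r)\<close> and \<open>Q r = B(e\<^sub>j, v\<^sub>r)\<close> for the orbit
  \<open>v\<^sub>r = (\<sigma>\<^sub>i \<sigma>\<^sub>j)\<^sup>r v\<close>; as \<open>\<sigma>\<^sub>i \<sigma>\<^sub>j\<close> is a rotation by \<open>2\<pi>/n\<close>, both satisfy a recurrence with
  coefficient \<open>2 cos (2\<pi>/n)\<close>.\<close>
lemma rotation_orbit_periodic:
  fixes P Q :: "nat \<Rightarrow> real" and n :: nat
  defines "c \<equiv> cos (pi / real n)"
  assumes n: "n \<ge> 2"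
    and P: "\<And>r. P (Suc r) = - P r - 2 * c * Q r"
    and Q: "\<And>r. Q (Suc r) = 2 * c * P r + (4 * c^2 - 1) * Q r"
  shows "P n = P 0 \<and> Q n = Q 0"
proof (cases "n = 2")
  case True
  then have "c = 0" by (simp add: c_def)
  then show ?thesis using True P Q by (simp add: numeral_2_eq_2)
next
  case False
  have P2: "P (Suc (Suc r)) = (4 * c^2 - 2) * P (Suc r) - P r" for r
  proof -
    have h: "2 * c * Q r = - P (Suc r) - P r" using P[of r] by simp
    have "P (Suc (Suc r)) = - P (Suc r) - 4 * c^2 * P r - (4 * c^2 - 1) * (2 * c * Q r)"
      using P[of "Suc r"] Q[of r] by (simp add: algebra_simps power2_eq_square)
    also have "\<dots> = (4 * c^2 - 2) * P (Suc r) - P r" unfolding h by (simp add: algebra_simps)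
    finally show ?thesis .
  qed
  have Q2: "Q (Suc (Suc r)) = (4 * c^2 - 2) * Q (Suc r) - Q r" for r
  proof -
    have h: "2 * c * P r = Q (Suc r) - (4 * c^2 - 1) * Q r" using Q[of r] by simp
    have h2: "2 * c * P (Suc r) = - (2 * c * P r) - 4 * c^2 * Q r"
      unfolding P[of r] by (simp add: algebra_simps power2_eq_square)
    have "Q (Suc (Suc r)) = - (2 * c * P r) - 4 * c^2 * Q r + (4 * c^2 - 1) * Q (Suc r)"
      unfolding Q[of "Suc r"] h2 by simp
    also have "\<dots> = (4 * c^2 - 2) * Q (Suc r) - Q r" unfolding h by (simp add: algebra_simps)
    finally show ?thesis .
  qed
  have "4 * c^2 - 2 = 2 * cos (2 * pi / n)"
    using cos_double_cos[of "pi / real n"] by (simp add: c_def)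
  then show ?thesis
    using cos_recurrence_periodic[of n P] cos_recurrence_periodic[of n Q] P2 Q2 n False by simp
qed

text \<open>Summing the recurrences over a period gives a linear system for the two sums with
  determinant \<open>2 - 2c\<^sup>2 \<noteq> 0\<close>.\<close>
lemma rotation_orbit_sums:
  fixes P Q :: "nat \<Rightarrow> real" and n :: nat
  defines "c \<equiv> cos (pi / real n)"
  assumes n: "n \<ge> 2"
    and P: "\<And>r. P (Suc r) = - P r - 2 * c * Q r"
    and Q: "\<And>r. Q (Suc r) = 2 * c * P r + (4 * c^2 - 1) * Q r"
  shows "(\<Sum>q<n. P q) = 0" and "(\<Sum>q<n. Q q) = 0"
proof -
  define SP where "SP = (\<Sum>q<n. P q)"
  define SQ where "SQ = (\<Sum>q<n. Q q)"
  have per: "P n = P 0" "Q n = Q 0"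
    using rotation_orbit_periodic[OF n] P Q unfolding c_def by blast+
  have "(\<Sum>q<n. P (Suc q)) = SP" "(\<Sum>q<n. Q (Suc q)) = SQ"
    unfolding SP_def SQ_def using per sum.lessThan_Suc_shift[of P n] sum.lessThan_Suc[of P n]
      sum.lessThan_Suc_shift[of Q n] sum.lessThan_Suc[of Q n] by simp_all
  then have SP: "SP = - SP - 2 * c * SQ" and SQ: "SQ = 2 * c * SP + (4 * c^2 - 1) * SQ"
    unfolding SP_def SQ_def P Q by (simp_all add: sum.distrib sum_subtractf sum_negf sum_distrib_left)
  have "c^2 < 1"
  proof -
    have a: "0 < pi / real n" "pi / real n \<le> pi / 2" using n by (auto simp: field_simps)
    then have "c < cos 0" unfolding c_def using pi_gt_zero by (intro cos_monotone_0_pi) linarith+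
    moreover have "0 \<le> c" unfolding c_def by (rule cos_ge_zero) (use a in auto)
    ultimately show ?thesis by (simp add: power2_eq_square) (smt (verit) mult_left_le_one_le)
  qed
  moreover have SP': "SP = - c * SQ" using SP by simp
  then have "SQ * (2 - 2 * c^2) = 0" using SQ by (simp add: algebra_simps power2_eq_square)
  ultimately have "SQ = 0" by simp
  with SP' show "(\<Sum>q<n. P q) = 0" "(\<Sum>q<n. Q q) = 0" unfolding SP_def SQ_def by simp_all
qed

section \<open>Words modulo the Coxeter relations\<close>

locale coxeter_system =
  fixes M :: "nat \<Rightarrow> nat \<Rightarrow> enat" and S :: "nat set"
  assumes coxeter_matrix_M: "coxeter_matrix M S"
begin

definition word_eq :: "nat list \<Rightarrow> nat list \<Rightarrow> bool" (infix "\<doteq>" 50) where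
  "u \<doteq> v \<longleftrightarrow> (u, v) \<in> cox_rel M S"

abbreviation "cstep \<equiv> cox_step M S"

lemma M_diag: "i \<in> S \<Longrightarrow> M i i = 1"
  using coxeter_matrix_M by (simp add: coxeter_matrix_def)

lemma M_sym: "i \<in> S \<Longrightarrow> j \<in> S \<Longrightarrow> M i j = M j i"
  using coxeter_matrix_M by (cases "i = j") (auto simp: coxeter_matrix_def)

lemma M_ge2: "i \<in> S \<Longrightarrow> j \<in> S \<Longrightarrow> i \<noteq> j \<Longrightarrow> M i j \<ge> 2"
  using coxeter_matrix_M by (auto simp: coxeter_matrix_def)

lemma cstep_lists: "(u, v) \<in> cstep \<Longrightarrow> (u \<in> lists S \<longleftrightarrow> v \<in> lists S)"
  unfolding cox_step_def using set_alt by fastforce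

lemma cstep_context: "(u, v) \<in> cstep \<Longrightarrow> (x @ u @ y, x @ v @ y) \<in> cstep"
  unfolding cox_step_def by clarsimp (metis append.assoc)

lemma cstep_closure_context:
  "(u, v) \<in> (cstep \<union> cstep\<inverse>)\<^sup>* \<Longrightarrow> (x @ u @ y, x @ v @ y) \<in> (cstep \<union> cstep\<inverse>)\<^sup>*"
proof (induction rule: rtrancl_induct)
  case base then show ?case by simp
next
  case (step b c)
  then have "(x @ b @ y, x @ c @ y) \<in> cstep \<union> cstep\<inverse>" using cstep_context by blast
  then show ?case using step by (meson rtrancl.rtrancl_into_rtrancl)
qed

lemma word_eq_iff: "a \<doteq> b \<longleftrightarrow> (a, b) \<in> (cstep \<union> cstep\<inverse>)\<^sup>* \<and> a \<in> lists S \<and> b \<in> lists S"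
  by (simp add: word_eq_def cox_rel_def)

lemma word_eq_refl[intro]: "a \<in> lists S \<Longrightarrow> a \<doteq> a"
  by (simp add: word_eq_iff)

lemma word_eq_sym: "a \<doteq> b \<Longrightarrow> b \<doteq> a"
proof -
  assume "a \<doteq> b"
  then have "(b, a) \<in> ((cstep \<union> cstep\<inverse>)\<inverse>)\<^sup>*" "a \<in> lists S" "b \<in> lists S"
    unfolding word_eq_iff by (auto intro: rtrancl_converseI)
  moreover have "(cstep \<union> cstep\<inverse>)\<inverse> = cstep \<union> cstep\<inverse>" by auto
  ultimately show ?thesis unfolding word_eq_iff by simp
qed

lemma word_eq_trans[trans]: "a \<doteq> b \<Longrightarrow> b \<doteq> c \<Longrightarrow> a \<doteq> c"
  unfolding word_eq_iff by auto

lemma word_eq_lists: "a \<doteq> b \<Longrightarrow> a \<in> lists S" "a \<doteq> b \<Longrightarrow> b \<in> lists S"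
  by (auto simp: word_eq_iff)

lemma word_eq_context: "u \<doteq> v \<Longrightarrow> x \<in> lists S \<Longrightarrow> y \<in> lists S \<Longrightarrow> x @ u @ y \<doteq> x @ v @ y"
  unfolding word_eq_iff using cstep_closure_context by auto

lemma word_eq_append: "u \<doteq> v \<Longrightarrow> x \<doteq> y \<Longrightarrow> u @ x \<doteq> v @ y"
proof -
  assume a: "u \<doteq> v" "x \<doteq> y"
  have "u @ x \<doteq> v @ x" using word_eq_context[OF a(1), of "[]" x] word_eq_lists[OF a(2)] by simp
  also have "v @ x \<doteq> v @ y" using word_eq_context[OF a(2), of v "[]"] word_eq_lists[OF a(1)] by simp
  finally show ?thesis .
qed

lemma word_eq_relator: "i \<in> S \<Longrightarrow> j \<in> S \<Longrightarrow> M i j = enat n \<Longrightarrow> alt i j (2 * n) \<doteq> []"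
proof -
  assume a: "i \<in> S" "j \<in> S" "M i j = enat n"
  have "([] @ alt i j (2 * n) @ [], [] @ []) \<in> cstep" unfolding cox_step_def using a by blast
  moreover have "alt i j (2 * n) \<in> lists S" using set_alt[of i j "2 * n"] a by auto
  ultimately show ?thesis unfolding word_eq_iff by auto
qed

lemma word_eq_square: "i \<in> S \<Longrightarrow> [i, i] \<doteq> []"
  using word_eq_relator[of i i 1] M_diag by (simp add: one_enat_def numeral_2_eq_2)

lemma word_eq_Cons_Cons: "i \<in> S \<Longrightarrow> i # i # w \<doteq> w \<longleftrightarrow> w \<in> lists S"
proof
  assume "i \<in> S" "w \<in> lists S"
  then show "i # i # w \<doteq> w" using word_eq_context[OF word_eq_square, of i "[]" w] by simp
qed (rule word_eq_lists(2))

lemma rev_append_word_eq_Nil: "w \<in> lists S \<Longrightarrow> rev w @ w \<doteq> []"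
proof (induction w)
  case Nil then show ?case by auto
next
  case (Cons a w)
  have "rev w @ [a, a] @ w \<doteq> rev w @ [] @ w" using word_eq_context[OF word_eq_square[of a], of "rev w" w] Cons by auto
  then show ?case using Cons by (auto intro: word_eq_trans)
qed

lemma append_rev_word_eq_Nil: "w \<in> lists S \<Longrightarrow> w @ rev w \<doteq> []"
  using rev_append_word_eq_Nil[of "rev w"] by simp

lemma word_eq_cancel_left: "a \<in> lists S \<Longrightarrow> a @ x \<doteq> a @ y \<Longrightarrow> x \<doteq> y"
proof -
  assume a: "a \<in> lists S" "a @ x \<doteq> a @ y"
  have x: "x \<in> lists S" "y \<in> lists S" using word_eq_lists[OF a(2)] by auto
  have "x \<doteq> rev a @ a @ x" using word_eq_context[OF rev_append_word_eq_Nil[OF a(1)], of "[]" x] x word_eq_sym by auto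
  also have "rev a @ a @ x \<doteq> rev a @ a @ y" using word_eq_context[OF a(2), of "rev a" "[]"] a by auto
  also have "rev a @ a @ y \<doteq> y" using word_eq_context[OF rev_append_word_eq_Nil[OF a(1)], of "[]" y] x by auto
  finally show ?thesis .
qed

lemma word_eq_cancel_right: "a \<in> lists S \<Longrightarrow> x @ a \<doteq> y @ a \<Longrightarrow> x \<doteq> y"
proof -
  assume a: "a \<in> lists S" "x @ a \<doteq> y @ a"
  have x: "x \<in> lists S" "y \<in> lists S" using word_eq_lists[OF a(2)] by auto
  have "x \<doteq> x @ a @ rev a" using word_eq_context[OF append_rev_word_eq_Nil[OF a(1)], of x "[]"] x word_eq_sym by auto
  also have "x @ a @ rev a \<doteq> y @ a @ rev a" using word_eq_context[OF a(2), of "[]" "rev a"] a by auto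
  also have "y @ a @ rev a \<doteq> y" using word_eq_context[OF append_rev_word_eq_Nil[OF a(1)], of y "[]"] x by auto
  finally show ?thesis .
qed

lemma append_word_eq_iff:
  assumes g': "g' \<in> lists S"
  shows "c @ g' \<doteq> g \<longleftrightarrow> c \<doteq> g @ rev g'"
proof
  assume h: "c @ g' \<doteq> g"
  have "c \<doteq> c @ g' @ rev g'"
    using word_eq_context[OF append_rev_word_eq_Nil[OF g'], of c "[]"] word_eq_lists(1)[OF h]
    by (simp add: word_eq_sym)
  also have "c @ g' @ rev g' \<doteq> g @ rev g'" using word_eq_append[OF h word_eq_refl[of "rev g'"]] g' by simp
  finally show "c \<doteq> g @ rev g'" .
next
  assume h: "c \<doteq> g @ rev g'"
  have "c @ g' \<doteq> g @ rev g' @ g'" using word_eq_append[OF h word_eq_refl[OF g']] by simp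
  also have "\<dots> \<doteq> g"
    using word_eq_context[OF rev_append_word_eq_Nil[OF g'], of g "[]"] word_eq_lists(2)[OF h] by simp
  finally show "c @ g' \<doteq> g" .
qed

lemma word_eq_even_length: "a \<doteq> b \<Longrightarrow> even (length a) = even (length b)"
proof -
  assume "a \<doteq> b"
  then have "(a, b) \<in> (cstep \<union> cstep\<inverse>)\<^sup>*" by (simp add: word_eq_iff)
  then show ?thesis
  proof (induction rule: rtrancl_induct)
    case (step b c)
    then have "even (length b) = even (length c)"
      by (auto simp: cox_step_def length_alt)
    then show ?case using step by simp
  qed simp
qed

section \<open>The Tits representation\<close>

text \<open>Vectors of \<open>\<real>\<^sup>S\<close> are encoded as functions \<open>nat \<Rightarrow> real\<close>;
  \<open>bform i j\<close> is the bilinear form \<open>B(e\<^sub>i, e\<^sub>j) = -cos (\<pi> / m\<^sub>i\<^sub>j)\<close> (and \<open>-1\<close> for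
  \<open>m\<^sub>i\<^sub>j = \<infinity>\<close>), \<open>bform_vec i v = B(e\<^sub>i, v)\<close>, and \<open>refl_vec i\<close> is the reflection
  \<open>v \<mapsto> v - 2 B(e\<^sub>i, v) e\<^sub>i\<close>.\<close>

definition bform :: "nat \<Rightarrow> nat \<Rightarrow> real" where
  "bform i j = (if i = j then 1 else (case M i j of enat n \<Rightarrow> - cos (pi / real n) | \<infinity> \<Rightarrow> -1))"

definition bform_vec :: "nat \<Rightarrow> (nat \<Rightarrow> real) \<Rightarrow> real" where
  "bform_vec i v = (\<Sum>l\<in>S. bform i l * v l)"

definition unit_vec :: "nat \<Rightarrow> nat \<Rightarrow> real" where
  "unit_vec j = (\<lambda>l. if l = j then 1 else 0)"

definition refl_vec :: "nat \<Rightarrow> (nat \<Rightarrow> real) \<Rightarrow> (nat \<Rightarrow> real)" where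
  "refl_vec i v = (\<lambda>l. v l - 2 * bform_vec i v * unit_vec i l)"

abbreviation tits_rep :: "nat list \<Rightarrow> (nat \<Rightarrow> real) \<Rightarrow> (nat \<Rightarrow> real)" where
  "tits_rep w \<equiv> foldr refl_vec w"

lemma finite_S: "finite S"
  using coxeter_matrix_M by (simp add: coxeter_matrix_def)

lemma bform_sym: "i \<in> S \<Longrightarrow> j \<in> S \<Longrightarrow> bform i j = bform j i"
  using M_sym by (simp add: bform_def)

lemma bform_vec_unit_vec: "j \<in> S \<Longrightarrow> bform_vec i (unit_vec j) = bform i j"
proof -
  assume j: "j \<in> S"
  have "bform_vec i (unit_vec j) = (\<Sum>l\<in>S. if l = j then bform i l else 0)"
    unfolding bform_vec_def unit_vec_def by (intro sum.cong) auto
  also have "\<dots> = bform i j" using j finite_S by (simp add: sum.delta)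
  finally show ?thesis .
qed

lemma bform_vec_diff2:
  "bform_vec i (\<lambda>l. v l - a * unit_vec j l - b * unit_vec j' l)
     = bform_vec i v - a * bform_vec i (unit_vec j) - b * bform_vec i (unit_vec j')"
  unfolding bform_vec_def by (simp add: sum_subtractf sum_distrib_left sum.distrib algebra_simps)

lemma bform_vec_diff:
  "bform_vec i (\<lambda>l. v l - a * unit_vec j l) = bform_vec i v - a * bform_vec i (unit_vec j)"
  using bform_vec_diff2[of i v a j 0 j] by simp

lemma refl_vec_other: "l \<noteq> i \<Longrightarrow> refl_vec i v l = v l"
  by (simp add: refl_vec_def unit_vec_def)

lemma tits_rep_other: "l \<notin> set w \<Longrightarrow> tits_rep w v l = v l"
  by (induction w) (auto simp: refl_vec_other)

lemma refl_vec_involutive: "i \<in> S \<Longrightarrow> refl_vec i (refl_vec i v) = v"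
proof -
  assume i: "i \<in> S"
  have "bform_vec i (refl_vec i v) = - bform_vec i v"
    unfolding refl_vec_def using bform_vec_diff[of i v "2 * bform_vec i v" i] bform_vec_unit_vec[OF i]
    by (simp add: bform_def)
  then show ?thesis unfolding refl_vec_def[of i "refl_vec i v"] by (simp add: refl_vec_def algebra_simps)
qed

lemma tits_rep_alt: "tits_rep (alt i j (2 * n)) v = ((refl_vec i \<circ> refl_vec j) ^^ n) v"
proof (induction n arbitrary: v)
  case (Suc n)
  have "alt i j (2 * Suc n) = [i, j] @ alt i j (2 * n)" by (simp add: numeral_2_eq_2)
  then show ?case using Suc by simp
qed simp

lemma refl_vec_braid:
  assumes ij: "i \<in> S" "j \<in> S" "i \<noteq> j" and Mij: "M i j = enat n"
  shows "((refl_vec i \<circ> refl_vec j) ^^ n) v = v"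
proof -
  define c where "c = cos (pi / real n)"
  define T where "T = refl_vec i \<circ> refl_vec j"
  define P where "P r = bform_vec i ((T ^^ r) v)" for r
  define Q where "Q r = bform_vec j ((T ^^ r) v)" for r
  have n: "n \<ge> 2" using M_ge2[OF ij] Mij by (simp add: numeral_eq_enat)
  have B: "bform i j = - c" "bform j i = - c" "bform i i = 1" "bform j j = 1"
    using Mij bform_sym[OF ij(1,2)] ij(3) by (auto simp: bform_def c_def)
  have T: "T u = (\<lambda>l. u l - (2 * bform_vec i u + 4 * c * bform_vec j u) * unit_vec i l
                          - 2 * bform_vec j u * unit_vec j l)" for u
  proof -
    have "bform_vec i (refl_vec j u) = bform_vec i u + 2 * c * bform_vec j u"
      unfolding refl_vec_def using bform_vec_diff[of i u "2 * bform_vec j u" j]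
        bform_vec_unit_vec[OF ij(2), of i] B by simp
    then show ?thesis unfolding T_def refl_vec_def[of i] by (auto simp: refl_vec_def algebra_simps)
  qed
  have P: "P (Suc r) = - P r - 2 * c * Q r" and Q: "Q (Suc r) = 2 * c * P r + (4 * c^2 - 1) * Q r" for r
    unfolding P_def Q_def funpow.simps comp_apply T bform_vec_diff2
      bform_vec_unit_vec[OF ij(1)] bform_vec_unit_vec[OF ij(2)] B
    by (simp_all add: algebra_simps power2_eq_square)
  have orbit: "(T ^^ r) v = (\<lambda>l. v l - (\<Sum>q<r. 2 * P q + 4 * c * Q q) * unit_vec i l
                                    - (\<Sum>q<r. 2 * Q q) * unit_vec j l)" for r
  proof (induction r)
    case (Suc r)
    have "(T ^^ Suc r) v = (\<lambda>l. (T ^^ r) v l - (2 * P r + 4 * c * Q r) * unit_vec i l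
                                 - 2 * Q r * unit_vec j l)"
      unfolding funpow.simps comp_apply T P_def Q_def by simp
    then show ?case using Suc by (simp add: algebra_simps)
  qed simp
  have "(\<Sum>q<n. P q) = 0" "(\<Sum>q<n. Q q) = 0"
    using rotation_orbit_sums[OF n, of P Q] P Q unfolding c_def by blast+
  then show ?thesis
    using orbit[of n] unfolding T_def by (simp add: sum.distrib flip: sum_distrib_left)
qed

lemma tits_rep_relator: "i \<in> S \<Longrightarrow> j \<in> S \<Longrightarrow> M i j = enat n \<Longrightarrow> tits_rep (alt i j (2 * n)) v = v"
proof -
  assume a: "i \<in> S" "j \<in> S" "M i j = enat n"
  show ?thesis
  proof (cases "i = j")
    case True
    then have "n = 1" using M_diag[OF a(1)] a(3) by (simp add: one_enat_def)
    then show ?thesis using True refl_vec_involutive[of i] a by (simp add: numeral_2_eq_2)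
  next
    case False
    then show ?thesis using refl_vec_braid[OF a(1,2) False a(3)] tits_rep_alt by simp
  qed
qed

lemma tits_rep_cstep: "(u, w) \<in> cstep \<Longrightarrow> tits_rep u = tits_rep w"
  unfolding cox_step_def by (clarsimp simp: fun_eq_iff tits_rep_relator)

lemma tits_rep_word_eq: "u \<doteq> w \<Longrightarrow> tits_rep u = tits_rep w"
proof -
  assume "u \<doteq> w"
  then have "(u, w) \<in> (cstep \<union> cstep\<inverse>)\<^sup>*" by (simp add: word_eq_iff)
  then show ?thesis
    by (induction rule: rtrancl_induct) (auto dest: tits_rep_cstep)
qed

text \<open>\<open>\<sigma>\<^sub>j\<close> negates the \<open>j\<close>-th coordinate of \<open>e\<^sub>j\<close>, which the other reflections leave unchanged.\<close>
lemma generator_in_parabolic: "j \<in> S \<Longrightarrow> [j] \<doteq> u \<Longrightarrow> u \<in> lists A \<Longrightarrow> j \<in> A"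
proof (rule ccontr)
  assume a: "j \<in> S" "[j] \<doteq> u" "u \<in> lists A" "j \<notin> A"
  have "j \<notin> set u" using a(3,4) by auto
  then have "tits_rep u (unit_vec j) j = 1" using tits_rep_other by (simp add: unit_vec_def)
  moreover have "tits_rep [j] (unit_vec j) j = -1"
    using a(1) bform_vec_unit_vec[of j j] by (simp add: refl_vec_def bform_def unit_vec_def)
  ultimately show False using tits_rep_word_eq[OF a(2)] by simp
qed

section \<open>Counting reflections\<close>

text \<open>For \<open>w = s\<^sub>0 \<cdots> s\<^sub>n\<^sub>-\<^sub>1\<close>, \<open>refl_word w p = s\<^sub>0 \<cdots> s\<^sub>p\<^sub>-\<^sub>1 s\<^sub>p s\<^sub>p\<^sub>-\<^sub>1 \<cdots> s\<^sub>0\<close> is the \<open>p\<close>-th reflection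
  crossed by \<open>w\<close>; the parity of \<open>refl_count w t\<close> is Tits' invariant \<open>\<eta>(w, t)\<close>.\<close>

definition refl_word :: "nat list \<Rightarrow> nat \<Rightarrow> nat list" where
  "refl_word w p = take p w @ [w ! p] @ rev (take p w)"

definition refl_count :: "nat list \<Rightarrow> nat list \<Rightarrow> nat" where
  "refl_count w t = card {p. p < length w \<and> refl_word w p \<doteq> t}"

definition refl_odd :: "nat list \<Rightarrow> nat list \<Rightarrow> bool" where
  "refl_odd w t \<longleftrightarrow> odd (refl_count w t)"

lemma refl_word_lists: "w \<in> lists A \<Longrightarrow> p < length w \<Longrightarrow> refl_word w p \<in> lists A"
  unfolding refl_word_def by (auto dest: in_set_takeD)

lemma refl_word_append_left: "p < length x \<Longrightarrow> refl_word (x @ y) p = refl_word x p"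
  by (simp add: refl_word_def nth_append)

lemma refl_word_append_right: "refl_word (x @ y) (length x + q) = x @ refl_word y q @ rev x"
  by (simp add: refl_word_def nth_append)

lemma refl_word_Cons_Suc: "refl_word (s # w) (Suc q) = s # refl_word w q @ [s]"
  by (simp add: refl_word_def)

lemma refl_word_Cons_0: "refl_word (s # w) 0 = [s]"
  by (simp add: refl_word_def)

lemma word_eq_conj_iff:
  assumes x: "x \<in> lists S" and a: "a \<in> lists S"
  shows "x @ a @ rev x \<doteq> t \<longleftrightarrow> a \<doteq> rev x @ t @ x"
proof
  assume h: "x @ a @ rev x \<doteq> t"
  have "a \<doteq> (rev x @ x) @ a @ (rev x @ x)"
    using word_eq_append[OF word_eq_append[OF rev_append_word_eq_Nil[OF x] word_eq_refl[OF a]]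
        rev_append_word_eq_Nil[OF x]] word_eq_sym by simp
  also have "(rev x @ x) @ a @ (rev x @ x) = rev x @ (x @ a @ rev x) @ x" by simp
  also have "\<dots> \<doteq> rev x @ t @ x" using word_eq_context[OF h, of "rev x" x] x by simp
  finally show "a \<doteq> rev x @ t @ x" .
next
  assume h: "a \<doteq> rev x @ t @ x"
  have t: "t \<in> lists S" using word_eq_lists[OF h] by auto
  have "x @ a @ rev x \<doteq> x @ (rev x @ t @ x) @ rev x" using word_eq_context[OF h, of x "rev x"] x by simp
  also have "x @ (rev x @ t @ x) @ rev x = (x @ rev x) @ t @ (x @ rev x)" by simp
  also have "\<dots> \<doteq> [] @ t @ []"
    using word_eq_append[OF word_eq_append[OF append_rev_word_eq_Nil[OF x] word_eq_refl[OF t]]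
        append_rev_word_eq_Nil[OF x]] by simp
  finally show "x @ a @ rev x \<doteq> t" by simp
qed

lemma refl_count_append:
  assumes x: "x \<in> lists S" and y: "y \<in> lists S"
  shows "refl_count (x @ y) t = refl_count x t + refl_count y (rev x @ t @ x)"
proof -
  have "{q. q < length y \<and> refl_word (x @ y) (length x + q) \<doteq> t}
      = {q. q < length y \<and> refl_word y q \<doteq> rev x @ t @ x}"
    using refl_word_lists[OF y] word_eq_conj_iff[OF x] by (auto simp: refl_word_append_right)
  moreover have "{p. p < length x \<and> refl_word (x @ y) p \<doteq> t} = {p. p < length x \<and> refl_word x p \<doteq> t}"
    by (auto simp: refl_word_append_left)
  ultimately show ?thesis
    unfolding refl_count_def using card_less_add_split[of "length x" "length y"] by simp
qed

lemma refl_count_cong: "t \<doteq> t' \<Longrightarrow> refl_count w t = refl_count w t'"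
  unfolding refl_count_def by (rule arg_cong[where f=card]) (blast intro: word_eq_trans word_eq_sym)

lemma refl_word_alt: "q < N \<Longrightarrow> refl_word (alt i j N) q = alt i j (Suc (2 * q))"
proof -
  assume q: "q < N"
  have "take q (alt i j N) @ [alt i j N ! q] = take (Suc q) (alt i j N)"
    by (rule take_Suc_conv_app_nth[symmetric]) (simp add: length_alt q)
  then have "refl_word (alt i j N) q = alt i j (Suc q) @ rev (alt i j q)"
    using q by (simp add: refl_word_def take_alt del: alt.simps)
  also have "\<dots> = alt i j (Suc (2 * q))" by (rule alt_palindrome)
  finally show ?thesis .
qed

lemma refl_word_alt_shift:
  "q < n \<Longrightarrow> refl_word (alt i j (2 * n)) (n + q) = alt i j (2 * n) @ refl_word (alt i j (2 * n)) q"
  using alt_even_append[of i j n "Suc (2 * q)"] by (simp add: refl_word_alt algebra_simps)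

lemma refl_count_relator_even:
  assumes ij: "i \<in> S" "j \<in> S" "M i j = enat n"
  shows "even (refl_count (alt i j (2 * n)) t)"
proof -
  let ?r = "alt i j (2 * n)"
  have "refl_word ?r (n + q) \<doteq> t \<longleftrightarrow> refl_word ?r q \<doteq> t" if q: "q < n" for q
  proof -
    have "refl_word ?r q \<in> lists S"
      using refl_word_lists[of ?r S q] set_alt[of i j "2 * n"] ij q by (auto simp: length_alt)
    then have "refl_word ?r (n + q) \<doteq> refl_word ?r q"
      using word_eq_append[OF word_eq_relator[OF ij] word_eq_refl] q by (simp add: refl_word_alt_shift)
    then show ?thesis by (meson word_eq_sym word_eq_trans)
  qed
  then have "refl_count ?r t = 2 * card {q. q < n \<and> refl_word ?r q \<doteq> t}"
    unfolding refl_count_def using card_less_add_split[of n n "\<lambda>p. refl_word ?r p \<doteq> t"]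
    by (simp add: length_alt mult_2 cong: conj_cong)
  then show ?thesis by simp
qed

lemma refl_odd_cstep:
  assumes st: "(u, v) \<in> cstep" and u: "u \<in> lists S" and t: "t \<in> lists S"
  shows "refl_odd u t = refl_odd v t"
proof -
  obtain x y i j n where e: "u = x @ alt i j (2 * n) @ y" "v = x @ y" and ij: "i \<in> S" "j \<in> S" "M i j = enat n"
    using st unfolding cox_step_def by blast
  let ?r = "alt i j (2 * n)"
  have r: "?r \<in> lists S" using set_alt[of i j "2 * n"] ij by auto
  have xy: "x \<in> lists S" "y \<in> lists S" using u e by auto
  let ?t = "rev x @ t @ x"
  have tt: "?t \<in> lists S" using xy t by simp
  have "refl_count u t = refl_count x t + refl_count ?r ?t + refl_count y (rev ?r @ ?t @ ?r)"
    using e refl_count_append[OF xy(1), of "?r @ y"] refl_count_append[OF r xy(2)] r xy by simp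
  moreover have "rev ?r @ ?t @ ?r \<doteq> ?t"
  proof -
    have "rev ?r \<doteq> []" using word_eq_relator[of j i n] ij M_sym rev_alt_even by simp
    then have "rev ?r @ ?t @ ?r \<doteq> [] @ ?t @ []"
      using word_eq_append[OF \<open>rev ?r \<doteq> []\<close> word_eq_append[OF word_eq_refl[OF tt] word_eq_relator[OF ij]]]
      by simp
    then show ?thesis by simp
  qed
  moreover have "refl_count v t = refl_count x t + refl_count y ?t" using e refl_count_append[OF xy] by simp
  ultimately show ?thesis unfolding refl_odd_def using refl_count_cong refl_count_relator_even[OF ij, of ?t] by auto
qed

lemma refl_odd_word_eq: "w \<doteq> w' \<Longrightarrow> t \<in> lists S \<Longrightarrow> refl_odd w t = refl_odd w' t"
proof -
  assume a: "w \<doteq> w'" "t \<in> lists S"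
  have w: "w \<in> lists S" using a by (simp add: word_eq_iff)
  have "(w, w') \<in> (cstep \<union> cstep\<inverse>)\<^sup>*" using a by (simp add: word_eq_iff)
  then have "w' \<in> lists S \<and> refl_odd w t = refl_odd w' t"
  proof (induction rule: rtrancl_induct)
    case base show ?case using w by simp
  next
    case (step b c)
    from step(3) have b: "b \<in> lists S" "refl_odd w t = refl_odd b t" by simp_all
    have "(b, c) \<in> cstep \<or> (c, b) \<in> cstep" using step(2) by simp
    then have "c \<in> lists S \<and> refl_odd b t = refl_odd c t"
    proof
      assume h: "(b, c) \<in> cstep"
      have "c \<in> lists S" using cstep_lists[OF h] b(1) by simp
      then show ?thesis using refl_odd_cstep[OF h b(1) a(2)] by simp
    next
      assume h: "(c, b) \<in> cstep"
      have "c \<in> lists S" using cstep_lists[OF h] b(1) by simp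
      then show ?thesis using refl_odd_cstep[OF h _ a(2)] by simp
    qed
    then show ?case using b by simp
  qed
  then show ?thesis by simp
qed

section \<open>Reduced words, deletion and exchange\<close>

definition reduced :: "nat list \<Rightarrow> bool" where
  "reduced w \<longleftrightarrow> w \<in> lists S \<and> (\<forall>u. u \<doteq> w \<longrightarrow> length w \<le> length u)"

definition del_nth :: "nat \<Rightarrow> nat list \<Rightarrow> nat list" where
  "del_nth p w = take p w @ drop (Suc p) w"

lemma del_nth_lists: "w \<in> lists A \<Longrightarrow> del_nth p w \<in> lists A"
  unfolding del_nth_def by (auto dest: in_set_takeD in_set_dropD)

lemma length_del_nth: "p < length w \<Longrightarrow> length (del_nth p w) = length w - 1"
  unfolding del_nth_def by simp

lemma refl_count_Cons:
  assumes s: "s \<in> S" and w: "w \<in> lists S"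
  shows "refl_count (s # w) t = (if [s] \<doteq> t then 1 else 0) + refl_count w (s # t @ [s])"
proof -
  have "refl_count ([s] @ w) t = refl_count [s] t + refl_count w (rev [s] @ t @ [s])"
    using refl_count_append[of "[s]" w t] s w by simp
  moreover have "refl_count [s] t = (if [s] \<doteq> t then 1 else 0)"
  proof -
    have "{p. p < length [s] \<and> refl_word [s] p \<doteq> t} = (if [s] \<doteq> t then {0} else {})"
      by (auto simp: refl_word_def)
    then show ?thesis unfolding refl_count_def by simp
  qed
  ultimately show ?thesis by simp
qed

lemma word_eq_Cons_prepend: "s \<in> S \<Longrightarrow> s # w \<doteq> u \<Longrightarrow> w \<doteq> s # u"
proof -
  assume s: "s \<in> S" and h: "s # w \<doteq> u"
  have "w \<in> lists S" using word_eq_lists(1)[OF h] by simp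
  then have "w \<doteq> s # s # w" using word_eq_Cons_Cons[OF s] word_eq_sym by blast
  also have "s # s # w \<doteq> s # u" using word_eq_context[OF h, of "[s]" "[]"] s by simp
  finally show ?thesis .
qed

lemma word_eq_cube: "s \<in> S \<Longrightarrow> [s, s, s] \<doteq> [s]"
  using word_eq_context[OF word_eq_square[of s], of "[]" "[s]"] by simp

lemma refl_odd_Cons_self: "s \<in> S \<Longrightarrow> w \<in> lists S \<Longrightarrow> refl_odd (s # w) [s] \<longleftrightarrow> \<not> refl_odd w [s]"
  unfolding refl_odd_def
  using refl_count_Cons[of s w "[s]"] refl_count_cong[OF word_eq_cube[of s], of w] word_eq_refl[of "[s]"]
  by simp

lemma refl_odd_obtain: "refl_odd w t \<Longrightarrow> \<exists>p < length w. refl_word w p \<doteq> t"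
proof -
  assume "refl_odd w t"
  then have "refl_count w t \<noteq> 0" unfolding refl_odd_def by (cases "refl_count w t") auto
  then have "{p. p < length w \<and> refl_word w p \<doteq> t} \<noteq> {}" unfolding refl_count_def by (metis card.empty)
  then show ?thesis by auto
qed

lemma refl_word_append_word_eq: "w \<in> lists S \<Longrightarrow> p < length w \<Longrightarrow> refl_word w p @ w \<doteq> del_nth p w"
proof -
  assume w: "w \<in> lists S" and p: "p < length w"
  define a where "a = take p w"
  define x where "x = w ! p"
  define c where "c = drop (Suc p) w"
  have wd: "w = a @ [x] @ c" using id_take_nth_drop[OF p] by (simp add: a_def x_def c_def)
  have l: "a \<in> lists S" "x \<in> S" "c \<in> lists S" using w p unfolding a_def x_def c_def
    by (auto dest: in_set_takeD in_set_dropD)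
  have rfe: "refl_word w p = a @ [x] @ rev a" by (simp add: refl_word_def a_def x_def)
  have "refl_word w p @ w = a @ [x] @ (rev a @ a) @ [x] @ c" using rfe wd by simp
  also have "\<dots> \<doteq> a @ [x] @ [] @ [x] @ c"
    using word_eq_context[OF rev_append_word_eq_Nil[OF l(1)], of "a @ [x]" "[x] @ c"] l by simp
  also have "a @ [x] @ [] @ [x] @ c = a @ [x, x] @ c" by simp
  also have "\<dots> \<doteq> a @ [] @ c" using word_eq_context[OF word_eq_square[OF l(2)], of a c] l by simp
  finally show ?thesis by (simp add: del_nth_def a_def c_def)
qed

lemma append_word_eq_del_nth:
  "u \<in> lists S \<Longrightarrow> p < length u \<Longrightarrow> refl_word u p \<doteq> t \<Longrightarrow> t @ u \<doteq> del_nth p u"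
  using word_eq_trans[OF word_eq_append[OF word_eq_sym word_eq_refl] refl_word_append_word_eq] .

lemma exchange_condition: "refl_odd w t \<Longrightarrow> w \<in> lists S \<Longrightarrow> \<exists>p < length w. t @ w \<doteq> del_nth p w"
  using refl_odd_obtain append_word_eq_del_nth by blast

lemma shortest_word_in_lists:
  assumes w: "w \<in> lists A" "A \<subseteq> S"
  shows "\<exists>u \<in> lists A. u \<doteq> w \<and> (\<forall>v \<in> lists A. v \<doteq> w \<longrightarrow> length u \<le> length v)"
proof -
  have ww: "w \<in> lists S" using w by auto
  obtain u where u: "u \<in> lists A \<and> u \<doteq> w" "\<And>v. v \<in> lists A \<and> v \<doteq> w \<Longrightarrow> length u \<le> length v"
    using ex_has_least_nat[of "\<lambda>u. u \<in> lists A \<and> u \<doteq> w" w length] w ww by blast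
  then show ?thesis by blast
qed

lemma reduced_word_exists: "w \<in> lists S \<Longrightarrow> \<exists>u. u \<doteq> w \<and> reduced u"
proof -
  assume w: "w \<in> lists S"
  obtain u where u: "u \<in> lists S" "u \<doteq> w" "\<And>v. v \<in> lists S \<Longrightarrow> v \<doteq> w \<Longrightarrow> length u \<le> length v"
    using shortest_word_in_lists[OF w] by blast
  have "reduced u" unfolding reduced_def
  proof (intro conjI allI impI)
    fix v assume "v \<doteq> u"
    then have "v \<doteq> w" using u(2) by (rule word_eq_trans)
    then show "length u \<le> length v" using u(3) word_eq_lists(1) by blast
  qed (rule u(1))
  then show ?thesis using u by blast
qed

lemma reduced_ConsD: "reduced (s # w) \<Longrightarrow> reduced w"
proof -
  assume r: "reduced (s # w)"
  have sw: "s \<in> S" "w \<in> lists S" using r by (auto simp: reduced_def)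
  { fix u assume u: "u \<doteq> w"
    have "s # u \<doteq> s # w" using word_eq_context[OF u, of "[s]" "[]"] sw by simp
    then have "length (s # w) \<le> length (s # u)" using r unfolding reduced_def by blast
    then have "length w \<le> length u" by simp }
  then show ?thesis using sw by (simp add: reduced_def)
qed

lemma reduced_word_eq_same_length: "reduced w \<Longrightarrow> u \<doteq> w \<Longrightarrow> length u = length w \<Longrightarrow> reduced u"
  unfolding reduced_def
proof (intro conjI allI impI)
  fix v assume a: "w \<in> lists S \<and> (\<forall>u. u \<doteq> w \<longrightarrow> length w \<le> length u)" "u \<doteq> w" "length u = length w" "v \<doteq> u"
  have "v \<doteq> w" using a(4) a(2) by (rule word_eq_trans)
  then show "length u \<le> length v" using a by simp
next
  assume "u \<doteq> w" then show "u \<in> lists S" by (rule word_eq_lists)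
qed

lemma split_at_two_positions:
  assumes "p < q" "q < length w"
  shows "\<exists>a x b y c. w = a @ [x] @ b @ [y] @ c \<and> length a = p \<and> length a + 1 + length b = q"
proof -
  let ?r = "drop (Suc p) w" and ?j = "q - Suc p"
  have p: "p < length w" using assms by simp
  have j: "?j < length ?r" using assms by simp
  have w1: "w = take p w @ [w ! p] @ ?r" using id_take_nth_drop[OF p] by simp
  have r1: "?r = take ?j ?r @ [?r ! ?j] @ drop (Suc ?j) ?r" using id_take_nth_drop[OF j] by simp
  have "w = take p w @ [w ! p] @ take ?j ?r @ [?r ! ?j] @ drop (Suc ?j) ?r"
    using w1 r1 by (metis append.assoc)
  moreover have "length (take p w) = p" using p by simp
  moreover have "length (take ?j ?r) = ?j" using j by simp
  ultimately show ?thesis using assms by (intro exI[of _ "take p w"] exI[of _ "w ! p"] exI[of _ "take ?j ?r"]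
        exI[of _ "?r ! ?j"] exI[of _ "drop (Suc ?j) ?r"]) auto
qed

lemma word_eq_delete_two_letters:
  assumes l: "a \<in> lists S" "b \<in> lists S" "c \<in> lists S" "x \<in> S" "y \<in> S"
    and h: "a @ [x] @ rev a \<doteq> a @ [x] @ b @ [y] @ rev b @ [x] @ rev a"
  shows "a @ [x] @ b @ [y] @ c \<doteq> a @ b @ c"
proof -
  have h1: "a @ ([x] @ rev a) \<doteq> a @ ([x] @ b @ [y] @ rev b @ [x] @ rev a)" using h by simp
  have h2: "[x] @ rev a \<doteq> ([x] @ b @ [y] @ rev b @ [x]) @ rev a"
    using word_eq_cancel_left[OF l(1) h1] by simp
  have h3: "[x] @ [] \<doteq> [x] @ (b @ [y] @ rev b @ [x])"
    using word_eq_cancel_right[OF _ h2] l(1) by simp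
  have "(b @ [y]) @ (rev b @ [x]) \<doteq> []"
    using word_eq_sym[OF word_eq_cancel_left[OF _ h3]] l(4) by simp
  then have hb: "b @ [y] \<doteq> [x] @ b"
    using append_word_eq_iff[of "rev b @ [x]" "b @ [y]" "[]"] l by simp
  have "a @ [x] @ b @ [y] @ c = a @ ([x] @ b) @ [y] @ c" by simp
  also have "\<dots> \<doteq> a @ (b @ [y]) @ [y] @ c"
    using word_eq_context[OF word_eq_sym[OF hb], of a "[y] @ c"] l by simp
  also have "a @ (b @ [y]) @ [y] @ c = (a @ b) @ [y, y] @ c" by simp
  also have "\<dots> \<doteq> (a @ b) @ [] @ c" using word_eq_context[OF word_eq_square[OF l(5)], of "a @ b" c] l by simp
  finally show ?thesis by simp
qed

lemma deletion_condition:
  assumes w: "w \<in> lists A" "A \<subseteq> S" and pq: "p < q" "q < length w" and e: "refl_word w p \<doteq> refl_word w q"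
  shows "\<exists>u \<in> lists A. u \<doteq> w \<and> length u + 2 = length w"
proof -
  obtain a x b y c where d: "w = a @ [x] @ b @ [y] @ c" "length a = p" "length a + 1 + length b = q"
    using split_at_two_positions[OF pq] by blast
  have lA: "a \<in> lists A" "b \<in> lists A" "c \<in> lists A" "x \<in> A" "y \<in> A" using w d by auto
  have l: "a \<in> lists S" "b \<in> lists S" "c \<in> lists S" "x \<in> S" "y \<in> S" using lA w(2) by auto
  have "refl_word w p = a @ [x] @ rev a" using d by (simp add: refl_word_def nth_append)
  moreover have "refl_word w q = a @ [x] @ b @ [y] @ rev b @ [x] @ rev a"
  proof -
    have w2: "w = (a @ [x] @ b) @ (y # c)" using d by simp
    have q2: "q = length (a @ [x] @ b)" using d by simp
    have "take q w = a @ [x] @ b" unfolding w2 q2 by simp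
    moreover have "w ! q = y" unfolding w2 q2 by (rule nth_append_length)
    ultimately show ?thesis by (simp add: refl_word_def)
  qed
  ultimately have "a @ [x] @ b @ [y] @ c \<doteq> a @ b @ c" using word_eq_delete_two_letters[OF l] e by simp
  then have "a @ b @ c \<doteq> w" using d(1) word_eq_sym by simp
  then show ?thesis using d lA by (intro bexI[of _ "a @ b @ c"]) auto
qed

text \<open>A shorter word for \<open>s w\<close> is, by parity, at least two letters shorter; the exchange
  condition for \<open>s\<close> then produces a word for \<open>w\<close> shorter than \<open>w\<close>.\<close>
lemma reduced_Cons_if_not_refl_odd:
  assumes r: "reduced w" and s: "s \<in> S" and np: "\<not> refl_odd w [s]"
  shows "reduced (s # w)"
proof (rule ccontr)
  assume "\<not> reduced (s # w)"
  moreover have "s # w \<in> lists S" using r s by (simp add: reduced_def)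
  ultimately obtain u where u: "u \<doteq> s # w" "length u < length (s # w)" unfolding reduced_def by force
  then have shorter: "length u + 1 < length (s # w)"
    using word_eq_even_length[OF u(1)] by (metis Suc_eq_plus1 Suc_lessI even_Suc)
  have "refl_odd u [s]"
    using refl_odd_Cons_self[OF s] np r refl_odd_word_eq[OF u(1)] s by (simp add: reduced_def)
  then obtain p where p: "p < length u" "[s] @ u \<doteq> del_nth p u"
    using exchange_condition word_eq_lists[OF u(1)] by blast
  have "w \<doteq> s # u" using word_eq_Cons_prepend[OF s word_eq_sym[OF u(1)]] .
  also have "s # u \<doteq> del_nth p u" using p(2) by simp
  finally have "length w \<le> length (del_nth p u)" using r by (simp add: reduced_def word_eq_sym)
  then show False using shorter p(1) length_del_nth[OF p(1)] by simp
qed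

lemma not_reduced_repeated_refl_word:
  "w \<in> lists S \<Longrightarrow> \<not> reduced w \<Longrightarrow> \<exists>p q. p < q \<and> q < length w \<and> refl_word w p \<doteq> refl_word w q"
proof (induction w)
  case Nil
  then show ?case by (simp add: reduced_def)
next
  case (Cons s w)
  have s: "s \<in> S" "w \<in> lists S" using Cons by auto
  show ?case
  proof (cases "reduced w")
    case False
    then obtain p q where pq: "p < q" "q < length w" "refl_word w p \<doteq> refl_word w q" using Cons s by blast
    have "refl_word (s # w) (Suc p) \<doteq> refl_word (s # w) (Suc q)"
      unfolding refl_word_Cons_Suc using word_eq_context[OF pq(3), of "[s]" "[s]"] s by simp
    then show ?thesis using pq by (intro exI[of _ "Suc p"] exI[of _ "Suc q"]) auto
  next
    case True
    then have "refl_odd w [s]" using reduced_Cons_if_not_refl_odd[OF True s(1)] Cons by blast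
    then obtain p where p: "p < length w" "refl_word w p \<doteq> [s]" using refl_odd_obtain by blast
    have "refl_word (s # w) (Suc p) \<doteq> [s, s, s]"
      unfolding refl_word_Cons_Suc using word_eq_context[OF p(2), of "[s]" "[s]"] s by simp
    also have "[s, s, s] \<doteq> [s]" by (rule word_eq_cube[OF s(1)])
    finally have "refl_word (s # w) 0 \<doteq> refl_word (s # w) (Suc p)" unfolding refl_word_Cons_0 by (rule word_eq_sym)
    then show ?thesis using p by (intro exI[of _ 0] exI[of _ "Suc p"]) auto
  qed
qed

lemma reduced_word_in_lists: "w \<in> lists A \<Longrightarrow> A \<subseteq> S \<Longrightarrow> \<exists>u \<in> lists A. u \<doteq> w \<and> reduced u"
proof -
  assume w: "w \<in> lists A" "A \<subseteq> S"
  obtain u where u: "u \<in> lists A" "u \<doteq> w" "\<And>v. v \<in> lists A \<Longrightarrow> v \<doteq> w \<Longrightarrow> length u \<le> length v"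
    using shortest_word_in_lists[OF w] by blast
  have "reduced u"
  proof (rule ccontr)
    assume "\<not> reduced u"
    then obtain p q where pq: "p < q" "q < length u" "refl_word u p \<doteq> refl_word u q"
      using not_reduced_repeated_refl_word word_eq_lists[OF u(2)] by blast
    then obtain v where v: "v \<in> lists A" "v \<doteq> u" "length v + 2 = length u"
      using deletion_condition[OF u(1) w(2)] by blast
    have "length u \<le> length v" using u(3)[OF v(1) word_eq_trans[OF v(2) u(2)]] .
    then show False using v(3) by simp
  qed
  then show ?thesis using u by blast
qed

lemma reduced_refl_odd_refl_word: "reduced w \<Longrightarrow> p < length w \<Longrightarrow> refl_odd w (refl_word w p)"
proof -
  assume r: "reduced w" and p: "p < length w"
  have w: "w \<in> lists S" using r by (simp add: reduced_def)
  have "{q. q < length w \<and> refl_word w q \<doteq> refl_word w p} = {p}"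
  proof (intro equalityI subsetI)
    fix q assume q: "q \<in> {q. q < length w \<and> refl_word w q \<doteq> refl_word w p}"
    show "q \<in> {p}"
    proof (rule ccontr)
      assume "q \<notin> {p}"
      then have "p < q \<or> q < p" by auto
      then obtain p' q' where "p' < q'" "q' < length w" "refl_word w p' \<doteq> refl_word w q'"
      proof
        assume "p < q" then show ?thesis using that[of p q] q p word_eq_sym[of "refl_word w q" "refl_word w p"] by simp
      next
        assume "q < p" then show ?thesis using that[of q p] q p by simp
      qed
      then obtain u where u: "u \<doteq> w" "length u + 2 = length w"
        using deletion_condition[OF w order_refl] by blast
      then show False using r by (auto simp: reduced_def)
    qed
  next
    fix q assume "q \<in> {p}"
    then show "q \<in> {q. q < length w \<and> refl_word w q \<doteq> refl_word w p}"
      using p refl_word_lists[OF w p] by auto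
  qed
  then show ?thesis unfolding refl_odd_def refl_count_def by simp
qed

text \<open>The first letter \<open>s\<close> of a reduced word is a reflection of every word \<open>u\<close> for the same
  element; by the Tits representation it is then a letter of \<open>u\<close>.\<close>
lemma reduced_word_support: "reduced w \<Longrightarrow> w \<doteq> u \<Longrightarrow> u \<in> lists A \<Longrightarrow> w \<in> lists A"
proof (induction w arbitrary: u)
  case (Cons s w)
  have s: "s \<in> S" using Cons(2) by (simp add: reduced_def)
  have u: "u \<in> lists S" using word_eq_lists[OF Cons(3)] by simp
  have "refl_odd (s # w) [s]"
    using reduced_refl_odd_refl_word[OF Cons(2), of 0] by (simp add: refl_word_Cons_0)
  then have "refl_odd u [s]" using refl_odd_word_eq[OF Cons(3)] s by simp
  then obtain p where p: "p < length u" "refl_word u p \<doteq> [s]" using refl_odd_obtain by blast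
  have "w \<doteq> s # u" using word_eq_Cons_prepend[OF s Cons(3)] .
  also have "s # u \<doteq> del_nth p u" using append_word_eq_del_nth[OF u p] by simp
  finally have "w \<in> lists A" using Cons.IH reduced_ConsD[OF Cons(2)] del_nth_lists[OF Cons(4)] by blast
  moreover have "s \<in> A"
    using generator_in_parabolic[OF s word_eq_sym[OF p(2)] refl_word_lists[OF Cons(4) p(1)]] .
  ultimately show ?case by simp
qed simp

lemma parabolic_Int: "w \<doteq> a \<Longrightarrow> a \<in> lists A \<Longrightarrow> w \<doteq> b \<Longrightarrow> b \<in> lists B \<Longrightarrow> \<exists>c \<in> lists (A \<inter> B). c \<doteq> w"
proof -
  assume h: "w \<doteq> a" "a \<in> lists A" "w \<doteq> b" "b \<in> lists B"
  obtain c where c: "c \<doteq> w" "reduced c" using reduced_word_exists word_eq_lists[OF h(1)] by blast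
  have "c \<in> lists A" using reduced_word_support[OF c(2) word_eq_trans[OF c(1) h(1)] h(2)] .
  moreover have "c \<in> lists B" using reduced_word_support[OF c(2) word_eq_trans[OF c(1) h(3)] h(4)] .
  ultimately show ?thesis using c by auto
qed

section \<open>Kilmoyer's lemma\<close>

lemma cstep_rev: "(u, v) \<in> cstep \<Longrightarrow> (rev u, rev v) \<in> cstep"
proof -
  assume "(u, v) \<in> cstep"
  then obtain x y i j n where e: "u = x @ alt i j (2 * n) @ y" "v = x @ y" "i \<in> S" "j \<in> S" "M i j = enat n"
    unfolding cox_step_def by blast
  have "M j i = enat n" using e M_sym by simp
  moreover have "rev u = rev y @ alt j i (2 * n) @ rev x" using e rev_alt_even by simp
  moreover have "rev v = rev y @ rev x" using e by simp
  ultimately show ?thesis unfolding cox_step_def using e by blast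
qed

lemma word_eq_rev: "u \<doteq> v \<Longrightarrow> rev u \<doteq> rev v"
proof -
  assume a: "u \<doteq> v"
  have "(u, v) \<in> (cstep \<union> cstep\<inverse>)\<^sup>*" using a by (simp add: word_eq_iff)
  then have "(rev u, rev v) \<in> (cstep \<union> cstep\<inverse>)\<^sup>*"
  proof (induction rule: rtrancl_induct)
    case base then show ?case by simp
  next
    case (step b c)
    have "(rev b, rev c) \<in> cstep \<union> cstep\<inverse>" using step(2) cstep_rev by auto
    then show ?case using step(3) by (rule rtrancl_into_rtrancl[rotated])
  qed
  then show ?thesis using a by (simp add: word_eq_iff)
qed

lemma reduced_rev: "reduced w \<Longrightarrow> reduced (rev w)"
proof -
  assume r: "reduced w"
  { fix u assume "u \<doteq> rev w"
    then have "rev u \<doteq> w" using word_eq_rev by fastforce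
    then have "length w \<le> length (rev u)" using r unfolding reduced_def by blast
    then have "length (rev w) \<le> length u" by simp }
  then show ?thesis using r by (simp add: reduced_def)
qed

lemma reduced_singleton: "r \<in> S \<Longrightarrow> reduced [r]"
proof -
  assume r: "r \<in> S"
  { fix u assume u: "u \<doteq> [r]"
    have "u \<noteq> []"
    proof
      assume "u = []"
      then have "[r] \<doteq> []" using word_eq_sym[OF u] by simp
      then show False using generator_in_parabolic[OF r, of "[]" "{}"] by simp
    qed
    then have "length [r] \<le> length u" by (cases u) auto }
  then show ?thesis using r by (simp add: reduced_def)
qed

lemma reduced_Cons_outside: "reduced g \<Longrightarrow> g \<in> lists A \<Longrightarrow> s \<in> S \<Longrightarrow> s \<notin> A \<Longrightarrow> reduced (s # g)"
proof -
  assume a: "reduced g" "g \<in> lists A" "s \<in> S" "s \<notin> A"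
  have "\<not> refl_odd g [s]"
  proof
    assume "refl_odd g [s]"
    then obtain p where p: "p < length g" "refl_word g p \<doteq> [s]" using refl_odd_obtain by blast
    have "refl_word g p \<in> lists A" using refl_word_lists[OF a(2) p(1)] .
    then show False using generator_in_parabolic[OF a(3) word_eq_sym[OF p(2)]] a(4) by simp
  qed
  then show ?thesis using reduced_Cons_if_not_refl_odd a by blast
qed

lemma Cons_not_word_eq_parabolic:
  assumes s: "s \<in> S" "s \<notin> A" and g: "g \<in> lists A" and h: "h \<in> lists A"
  shows "\<not> s # g \<doteq> h"
proof
  assume sg: "s # g \<doteq> h"
  have gS: "g \<in> lists S" using word_eq_lists(1)[OF sg] by simp
  have "h \<doteq> (h @ rev g) @ g"
    using word_eq_context[OF rev_append_word_eq_Nil[OF gS], of h "[]"] word_eq_lists(2)[OF sg]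
    by (simp add: word_eq_sym)
  with sg have "[s] @ g \<doteq> (h @ rev g) @ g" by (simp add: word_eq_trans)
  then have "[s] \<doteq> h @ rev g" using word_eq_cancel_right gS by blast
  then show False using generator_in_parabolic[OF s(1)] s(2) g h by simp
qed

lemma conj_in_parabolic_commutes:
  assumes g: "g \<in> lists A" "reduced g" and s: "s \<in> S" "s \<notin> A"
    and h: "[s] @ g @ [s] \<doteq> b" and b: "b \<in> lists A"
  shows "[s] @ g \<doteq> g @ [s]"
proof -
  have gS: "g \<in> lists S" using g(2) by (simp add: reduced_def)
  have "reduced (s # rev g)" using reduced_Cons_outside[OF reduced_rev[OF g(2)] _ s] g(1) by simp
  then have r: "reduced (g @ [s])" using reduced_rev by fastforce
  have "\<not> reduced (s # g @ [s])"
    using reduced_word_support[of "s # g @ [s]" b A] h b s by auto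
  then have "refl_odd (g @ [s]) [s]" using reduced_Cons_if_not_refl_odd[OF r s(1)] by blast
  then obtain p where p: "p < length (g @ [s])" "[s] @ g @ [s] \<doteq> del_nth p (g @ [s])"
    using exchange_condition gS s by fastforce
  show ?thesis
  proof (cases "p = length g")
    case True
    then have "([s] @ g) @ [s] \<doteq> g" using p(2) by (simp add: del_nth_def)
    moreover have "g \<doteq> (g @ [s]) @ [s]"
      using word_eq_context[OF word_eq_square[OF s(1)], of g "[]"] gS by (simp add: word_eq_sym)
    ultimately show ?thesis using word_eq_cancel_right s(1) by (meson word_eq_trans Cons_in_lists_iff lists.Nil)
  next
    case False
    then have "([s] @ g) @ [s] \<doteq> del_nth p g @ [s]" using p by (simp add: del_nth_def)
    then have "[s] @ g \<doteq> del_nth p g" by (rule word_eq_cancel_right[rotated]) (simp add: s(1))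
    then show ?thesis using Cons_not_word_eq_parabolic[OF s g(1) del_nth_lists[OF g(1)]] by simp
  qed
qed

definition commuting_gens :: "nat set \<Rightarrow> nat \<Rightarrow> nat set" where
  "commuting_gens A s = {r \<in> A. [r, s] \<doteq> [s, r]}"

text \<open>The first letter \<open>r\<close> of the reduced word \<open>r g s \<doteq> s r g\<close> is one of the reflections of
  \<open>s r g\<close>: not \<open>s\<close> itself, so \<open>s t s\<close> for a reflection \<open>t \<in> W\<^sub>A\<close> of \<open>r g\<close>, whence \<open>s r s \<in> W\<^sub>A\<close>.\<close>
lemma first_letter_commutes:
  assumes s: "s \<in> S" "s \<notin> A" and g: "r # g \<in> lists A" "reduced (r # g)"
    and comm: "[s] @ r # g \<doteq> (r # g) @ [s]"
  shows "[s] @ [r] \<doteq> [r] @ [s]"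
proof -
  have rS: "r \<in> S" "g \<in> lists S" using g(2) by (auto simp: reduced_def)
  let ?X = "s # r # g" and ?Y = "r # g @ [s]"
  have YX: "?Y \<doteq> ?X" using word_eq_sym[OF comm] by simp
  have "reduced ?Y"
    using reduced_word_eq_same_length[OF reduced_Cons_outside[OF g(2) g(1) s] YX] by simp
  then have "refl_odd ?Y [r]" using reduced_refl_odd_refl_word[of ?Y 0] by (simp add: refl_word_Cons_0)
  then have "refl_odd ?X [r]" using refl_odd_word_eq[OF YX] rS by simp
  then obtain p where p: "p < length ?X" "refl_word ?X p \<doteq> [r]" using refl_odd_obtain by blast
  show ?thesis
  proof (cases p)
    case 0
    then have "s # [] \<doteq> [r]" using p(2) by (simp add: refl_word_Cons_0)
    then show ?thesis using Cons_not_word_eq_parabolic[OF s, of "[]" "[r]"] g(1) by simp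
  next
    case (Suc p')
    let ?t = "refl_word (r # g) p'"
    have p': "p' < length (r # g)" using p(1) Suc by simp
    have "[s] @ ?t @ rev [s] \<doteq> [r]" using p(2) Suc by (simp add: refl_word_Cons_Suc)
    then have "[s] @ [r] @ [s] \<doteq> ?t"
      using word_eq_conj_iff[of "[s]" ?t "[r]"] s refl_word_lists[OF _ p'] rS by (simp add: word_eq_sym)
    then show ?thesis
      using conj_in_parabolic_commutes[OF _ reduced_singleton[OF rS(1)] s _ refl_word_lists[OF g(1) p']] g(1)
      by simp
  qed
qed

lemma commuting_reduced_word_in_lists:
  assumes s: "s \<in> S" "s \<notin> A"
  shows "g \<in> lists A \<Longrightarrow> reduced g \<Longrightarrow> [s] @ g \<doteq> g @ [s] \<Longrightarrow> g \<in> lists (commuting_gens A s)"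
proof (induction g)
  case (Cons r g)
  have comm: "[s] @ [r] \<doteq> [r] @ [s]" using first_letter_commutes[OF s Cons(2-4)] .
  have rS: "r \<in> S" "g \<in> lists S" using Cons(3) by (auto simp: reduced_def)
  have "[r] @ [s] @ g \<doteq> [s] @ [r] @ g"
    using word_eq_append[OF word_eq_sym[OF comm] word_eq_refl[OF rS(2)]] by simp
  also have "[s] @ [r] @ g \<doteq> [r] @ (g @ [s])" using Cons(4) by simp
  finally have "[s] @ g \<doteq> g @ [s]" using word_eq_cancel_left[of "[r]"] rS by simp
  then have "g \<in> lists (commuting_gens A s)" using Cons.IH reduced_ConsD[OF Cons(3)] Cons(2) by simp
  moreover have "r \<in> commuting_gens A s" unfolding commuting_gens_def using Cons(2) word_eq_sym[OF comm] by simp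
  ultimately show ?case by simp
qed simp

lemma kilmoyer:
  assumes A: "A \<subseteq> S" and g: "g \<in> lists A" and s: "s \<in> S" "s \<notin> A"
    and b: "b \<in> lists A" and h: "[s] @ g @ [s] \<doteq> b"
  shows "\<exists>c \<in> lists (commuting_gens A s). c \<doteq> g"
proof -
  obtain g0 where g0: "g0 \<in> lists A" "g0 \<doteq> g" "reduced g0" using reduced_word_in_lists[OF g A] by blast
  have "[s] @ g0 @ [s] \<doteq> [s] @ g @ [s]" using word_eq_context[OF g0(2), of "[s]" "[s]"] s by simp
  then have "[s] @ g0 @ [s] \<doteq> b" using h by (rule word_eq_trans)
  then have "[s] @ g0 \<doteq> g0 @ [s]" using conj_in_parabolic_commutes[OF g0(1) g0(3) s _ b] by simp
  then have "g0 \<in> lists (commuting_gens A s)" using commuting_reduced_word_in_lists[OF s g0(1) g0(3)] by simp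
  then show ?thesis using g0 by blast
qed

section \<open>Parabolic subgroups of finite index\<close>

definition elt :: "nat list \<Rightarrow> nat list set" where
  "elt w = cox_rel M S `` {w}"

lemma elt_mem_iff: "u \<in> elt w \<longleftrightarrow> w \<doteq> u"
  by (simp add: elt_def word_eq_def)

lemma elt_eqI: "u \<doteq> v \<Longrightarrow> elt u = elt v"
  unfolding elt_mem_iff[symmetric, THEN eq_reflection] set_eq_iff
  using word_eq_trans word_eq_sym by (meson elt_mem_iff)

lemma elt_eqD: "elt u = elt v \<Longrightarrow> u \<in> lists S \<Longrightarrow> u \<doteq> v"
proof -
  assume "elt u = elt v" "u \<in> lists S"
  then have "u \<in> elt v" using elt_mem_iff word_eq_refl by blast
  then show ?thesis using elt_mem_iff word_eq_sym by blast
qed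

definition finite_parabolic :: "nat set \<Rightarrow> bool" where
  "finite_parabolic A \<longleftrightarrow> finite (elt ` lists A)"

text \<open>\<open>pcoset A g\<close> is the coset \<open>W\<^sub>A g\<close> as a set of words; \<open>finite_index I A\<close> says that the
  cosets \<open>W\<^sub>A g\<close>, \<open>g \<in> W\<^sub>I\<close>, are finitely many, i.e. \<open>W\<^sub>A \<inter> W\<^sub>I\<close> has finite index in \<open>W\<^sub>I\<close>.\<close>

definition pcoset :: "nat set \<Rightarrow> nat list \<Rightarrow> nat list set" where
  "pcoset A g = {h. \<exists>a \<in> lists A. a @ g \<doteq> h}"

definition finite_index :: "nat set \<Rightarrow> nat set \<Rightarrow> bool" where
  "finite_index I A \<longleftrightarrow> finite (pcoset A ` lists I)"

lemma pcoset_subset: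
  assumes "B \<subseteq> S" "c \<in> lists B" "c @ g' \<doteq> g"
  shows "pcoset B g \<subseteq> pcoset B g'"
proof
  fix h assume "h \<in> pcoset B g"
  then obtain a where a: "a \<in> lists B" "a @ g \<doteq> h" unfolding pcoset_def by blast
  then have "(a @ c) @ g' \<doteq> h"
    using word_eq_trans[OF word_eq_context[OF assms(3), of a "[]"]] assms(1) by auto
  then show "h \<in> pcoset B g'" unfolding pcoset_def using a(1) assms(2) by fastforce
qed

lemma pcoset_eq_iff:
  assumes B: "B \<subseteq> S" and g: "g \<in> lists S" "g' \<in> lists S"
  shows "pcoset B g = pcoset B g' \<longleftrightarrow> (\<exists>c \<in> lists B. c @ g' \<doteq> g)"
proof
  assume "pcoset B g = pcoset B g'"
  moreover have "g \<in> pcoset B g" unfolding pcoset_def using g by (intro CollectI bexI[of _ "[]"]) auto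
  ultimately show "\<exists>c \<in> lists B. c @ g' \<doteq> g" unfolding pcoset_def by auto
next
  assume "\<exists>c \<in> lists B. c @ g' \<doteq> g"
  then obtain c where c: "c \<in> lists B" "c @ g' \<doteq> g" by blast
  have "rev c @ g \<doteq> g'"
    using c B append_word_eq_iff[OF g(1), of "rev c" g'] append_word_eq_iff[OF g(2), of c g]
    by (metis rev_rev_ident word_eq_rev rev_append)
  then show "pcoset B g = pcoset B g'"
    using pcoset_subset[OF B c] pcoset_subset[OF B, of "rev c" g g'] c(1) by auto
qed

lemma finite_index_restrict:
  assumes I: "I \<subseteq> S" and K: "K \<subseteq> I" and J: "J \<subseteq> S" and fi: "finite_index I J"
  shows "finite_index K (K \<inter> J)"
  unfolding finite_index_def
proof (rule finite_image_if_factors)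
  show "finite (pcoset J ` lists K)"
    using finite_subset[OF image_mono[OF lists_mono[OF K]] fi[unfolded finite_index_def]] .
next
  fix g g' assume g: "g \<in> lists K" "g' \<in> lists K" and e: "pcoset J g = pcoset J g'"
  have gS: "g \<in> lists S" "g' \<in> lists S" using g K I by auto
  obtain c where c: "c \<in> lists J" "c \<doteq> g @ rev g'"
    using e pcoset_eq_iff[OF J gS] append_word_eq_iff[OF gS(2)] by auto
  moreover have "g @ rev g' \<in> lists K" using g by simp
  ultimately obtain d where d: "d \<in> lists (K \<inter> J)" "d \<doteq> c"
    using parabolic_Int[OF word_eq_refl c(1) c(2)] word_eq_lists by (metis Int_commute)
  then have "d @ g' \<doteq> g" using append_word_eq_iff[OF gS(2)] c(2) word_eq_trans by blast
  then show "pcoset (K \<inter> J) g = pcoset (K \<inter> J) g'"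
    using pcoset_eq_iff[of "K \<inter> J" g g'] gS d(1) J by auto
qed

lemma finite_index_commuting_gens:
  assumes I: "I \<subseteq> S" and J: "J \<subseteq> I" and s: "s \<in> I" "s \<notin> J" and fi: "finite_index I J"
  shows "finite_index J (commuting_gens J s)"
  unfolding finite_index_def
proof (rule finite_image_if_factors[where f = "pcoset J \<circ> Cons s"])
  have "Cons s ` lists J \<subseteq> lists I" using J s by auto
  then show "finite ((pcoset J \<circ> Cons s) ` lists J)"
    unfolding image_comp[symmetric] using finite_subset[OF image_mono fi[unfolded finite_index_def]] by blast
next
  have JS: "J \<subseteq> S" and sS: "s \<in> S" using I J s by auto
  fix g g' assume g: "g \<in> lists J" "g' \<in> lists J" and e: "(pcoset J \<circ> Cons s) g = (pcoset J \<circ> Cons s) g'"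
  have gS: "g \<in> lists S" "g' \<in> lists S" using g JS by auto
  obtain c where c: "c \<in> lists J" "c @ s # g' \<doteq> s # g"
    using e pcoset_eq_iff[OF JS, of "s # g" "s # g'"] gS sS by auto
  then have "[s] @ (g @ rev g') @ [s] \<doteq> c"
    using append_word_eq_iff[of "s # g'" c "s # g"] gS sS by (simp add: word_eq_sym)
  then obtain d where d: "d \<in> lists (commuting_gens J s)" "d \<doteq> g @ rev g'"
    using kilmoyer[OF JS _ sS s(2) c(1)] g by (metis append_in_lists_conv rev_in_lists_iff word_eq_sym)
  then have "d @ g' \<doteq> g" using append_word_eq_iff[OF gS(2)] by blast
  then show "pcoset (commuting_gens J s) g = pcoset (commuting_gens J s) g'"
    using pcoset_eq_iff[of "commuting_gens J s" g g'] gS d(1) JS by (auto simp: commuting_gens_def)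
qed

lemma finite_elt_if_products:
  assumes U: "U \<subseteq> lists S" "finite (elt ` U)" and V: "V \<subseteq> lists S" "finite (elt ` V)"
    and W: "\<And>w. w \<in> W \<Longrightarrow> \<exists>x\<in>U. \<exists>y\<in>V. x @ y \<doteq> w"
  shows "finite (elt ` W)"
proof -
  define rep where "rep C = (SOME x. x \<in> lists S \<and> elt x = C)" for C
  have rep: "rep (elt x) \<doteq> x" if "x \<in> lists S" for x
  proof -
    have "rep (elt x) \<in> lists S \<and> elt (rep (elt x)) = elt x"
      unfolding rep_def by (rule someI[of _ x]) (use that in simp)
    then show ?thesis using elt_eqD by blast
  qed
  have "elt ` W \<subseteq> (\<lambda>(C, D). elt (rep C @ rep D)) ` (elt ` U \<times> elt ` V)"
  proof
    fix z assume "z \<in> elt ` W"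
    then obtain w x y where w: "z = elt w" "x \<in> U" "y \<in> V" "x @ y \<doteq> w" using W by blast
    then have "rep (elt x) @ rep (elt y) \<doteq> w"
      using word_eq_trans[OF word_eq_append[OF rep rep]] U(1) V(1) by blast
    then have "z = elt (rep (elt x) @ rep (elt y))" using w(1) elt_eqI by simp
    then show "z \<in> (\<lambda>(C, D). elt (rep C @ rep D)) ` (elt ` U \<times> elt ` V)" using w(2,3) by force
  qed
  then show ?thesis by (rule finite_subset) (use U(2) V(2) in simp)
qed

lemma finite_parabolic_if_finite_index:
  assumes I: "I \<subseteq> S" and J: "J \<subseteq> S" and fi: "finite_index I J" and fj: "finite_parabolic J"
  shows "finite_parabolic I"
proof -
  define r where "r D = (SOME g. g \<in> lists I \<and> pcoset J g = D)" for D
  have r: "r (pcoset J w) \<in> lists I \<and> pcoset J (r (pcoset J w)) = pcoset J w" if "w \<in> lists I" for w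
    unfolding r_def by (rule someI[of _ w]) (use that in simp)
  show ?thesis unfolding finite_parabolic_def
  proof (rule finite_elt_if_products[of "lists J" "r ` pcoset J ` lists I"])
    show "r ` pcoset J ` lists I \<subseteq> lists S" using r I by force
    show "finite (elt ` r ` pcoset J ` lists I)" using fi by (simp add: finite_index_def)
  next
    fix w assume w: "w \<in> lists I"
    then have "\<exists>c\<in>lists J. c @ r (pcoset J w) \<doteq> w"
      using r[OF w] pcoset_eq_iff[OF J, of w "r (pcoset J w)"] I by blast
    then show "\<exists>x\<in>lists J. \<exists>y\<in>r ` pcoset J ` lists I. x @ y \<doteq> w" using w by blast
  qed (use J fj in \<open>auto simp: finite_parabolic_def\<close>)
qed

lemma finite_parabolic_mono: "A \<subseteq> B \<Longrightarrow> finite_parabolic B \<Longrightarrow> finite_parabolic A"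
  unfolding finite_parabolic_def by (rule finite_subset[rotated]) (auto intro: lists_mono[THEN subsetD])

lemma finite_parabolic_empty: "finite_parabolic {}"
proof -
  have "lists {} = {[]}" by auto
  then show ?thesis by (simp add: finite_parabolic_def)
qed

section \<open>Irreducible infinite parabolic subgroups\<close>

definition cox_irreducible :: "nat set \<Rightarrow> bool" where
  "cox_irreducible T \<longleftrightarrow> \<not> (\<exists>P Q. P \<union> Q = T \<and> P \<inter> Q = {} \<and> P \<noteq> {} \<and> Q \<noteq> {} \<and>
                                 (\<forall>a\<in>P. \<forall>b\<in>Q. [a, b] \<doteq> [b, a]))"

lemma commuting_word_commutes:
  assumes AB: "\<forall>a\<in>A. \<forall>b\<in>B. [a, b] \<doteq> [b, a]" and x: "x \<in> B" and BS: "B \<subseteq> S" and AS: "A \<subseteq> S"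
  shows "u \<in> lists A \<Longrightarrow> [x] @ u \<doteq> u @ [x]"
proof (induction u)
  case Nil
  show ?case using x BS by (auto intro!: word_eq_refl)
next
  case (Cons a u)
  have aS: "a \<in> A" "u \<in> lists A" using Cons by auto
  have l: "a \<in> S" "x \<in> S" "u \<in> lists S" using aS x BS AS by auto
  have "[x] @ a # u = [x, a] @ u" by simp
  also have "\<dots> \<doteq> [a, x] @ u"
    using word_eq_append[OF word_eq_sym[OF AB[rule_format, OF aS(1) x]] word_eq_refl[OF l(3)]] .
  also have "[a, x] @ u = [a] @ ([x] @ u)" by simp
  also have "\<dots> \<doteq> [a] @ (u @ [x])" using word_eq_context[OF Cons.IH[OF aS(2)], of "[a]" "[]"] l by simp
  finally show ?case by simp
qed

lemma word_eq_split_commuting: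
  assumes AS: "A \<subseteq> S" and BS: "B \<subseteq> S" and AB: "\<forall>a\<in>A. \<forall>b\<in>B. [a, b] \<doteq> [b, a]"
  shows "w \<in> lists (A \<union> B) \<Longrightarrow> \<exists>u \<in> lists A. \<exists>v \<in> lists B. u @ v \<doteq> w"
proof (induction w)
  case Nil then show ?case by (intro bexI[of _ "[]"]) auto
next
  case (Cons x w)
  then obtain u v where uv: "u \<in> lists A" "v \<in> lists B" "u @ v \<doteq> w" by auto
  have xS: "x \<in> S" and uS: "u \<in> lists S" "v \<in> lists S" using Cons uv AS BS by auto
  have e: "x # u @ v \<doteq> x # w" using word_eq_context[OF uv(3), of "[x]" "[]"] xS by simp
  show ?case
  proof (cases "x \<in> A")
    case True
    then show ?thesis using uv e by (intro bexI[of _ "x # u"] bexI[of _ v]) auto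
  next
    case False
    then have xB: "x \<in> B" using Cons by auto
    have "([x] @ u) @ v \<doteq> (u @ [x]) @ v"
      using word_eq_append[OF commuting_word_commutes[OF AB xB BS AS uv(1)] word_eq_refl[OF uS(2)]] .
    then have "u @ x # v \<doteq> x # u @ v" using word_eq_sym by simp
    then have "u @ x # v \<doteq> x # w" using e by (rule word_eq_trans)
    then show ?thesis using uv xB by (intro bexI[of _ u] bexI[of _ "x # v"]) auto
  qed
qed

lemma finite_parabolic_Un_commuting:
  assumes "A \<subseteq> S" "B \<subseteq> S" "\<forall>a\<in>A. \<forall>b\<in>B. [a, b] \<doteq> [b, a]"
    and "finite_parabolic A" "finite_parabolic B"
  shows "finite_parabolic (A \<union> B)"
  unfolding finite_parabolic_def
  by (rule finite_elt_if_products[of "lists A" "lists B"])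
    (use assms word_eq_split_commuting in \<open>auto simp: finite_parabolic_def\<close>)

lemma finite_parabolic_if_irreducible_finite:
  "finite J \<Longrightarrow> J \<subseteq> S \<Longrightarrow> (\<forall>Y \<subseteq> J. cox_irreducible Y \<longrightarrow> finite_parabolic Y) \<Longrightarrow> finite_parabolic J"
proof (induction "card J" arbitrary: J rule: less_induct)
  case less
  show ?case
  proof (cases "cox_irreducible J")
    case True then show ?thesis using less.prems by blast
  next
    case False
    then obtain P Q where PQ: "P \<union> Q = J" "P \<inter> Q = {}" "P \<noteq> {}" "Q \<noteq> {}"
      "\<forall>a\<in>P. \<forall>b\<in>Q. [a, b] \<doteq> [b, a]"
      unfolding cox_irreducible_def by blast
    have fin: "finite P" "finite Q" using PQ less.prems by auto
    have "P \<subset> J" "Q \<subset> J" using PQ by auto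
    then have "card P < card J" "card Q < card J" using less.prems(1) by (simp_all add: psubset_card_mono)
    moreover have "P \<subseteq> S" "Q \<subseteq> S" using PQ less.prems by auto
    moreover have "\<forall>Y\<subseteq>P. cox_irreducible Y \<longrightarrow> finite_parabolic Y" "\<forall>Y\<subseteq>Q. cox_irreducible Y \<longrightarrow> finite_parabolic Y"
      using less.prems(3) PQ(1) by blast+
    ultimately have "finite_parabolic P" "finite_parabolic Q" using less.hyps fin by auto
    then show ?thesis using finite_parabolic_Un_commuting[of P Q] PQ less.prems by auto
  qed
qed

lemma cox_irreducible_insert:
  assumes Y: "cox_irreducible Y" and z: "z \<notin> Y" and y: "y \<in> Y" "\<not> [y, z] \<doteq> [z, y]"
  shows "cox_irreducible (insert z Y)"
  unfolding cox_irreducible_def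
proof
  have no_split: False if PQ: "P \<union> Q = insert z Y" "P \<inter> Q = {}" "Q \<noteq> {}" "z \<in> P"
    and comm: "\<forall>a\<in>P. \<forall>b\<in>Q. [a, b] \<doteq> [b, a]" for P Q
  proof -
    have "y \<notin> Q" using comm PQ(4) y(2) word_eq_sym by blast
    then have "P \<inter> Y \<noteq> {}" "(P \<inter> Y) \<union> Q = Y" "(P \<inter> Y) \<inter> Q = {}" using PQ y(1) z by auto
    then show False using Y PQ(3) comm unfolding cox_irreducible_def by blast
  qed
  assume "\<exists>P Q. P \<union> Q = insert z Y \<and> P \<inter> Q = {} \<and> P \<noteq> {} \<and> Q \<noteq> {} \<and>
                (\<forall>a\<in>P. \<forall>b\<in>Q. [a, b] \<doteq> [b, a])"
  then obtain P Q where PQ: "P \<union> Q = insert z Y" "P \<inter> Q = {}" "P \<noteq> {}" "Q \<noteq> {}"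
    and comm: "\<forall>a\<in>P. \<forall>b\<in>Q. [a, b] \<doteq> [b, a]" by blast
  have comm': "\<forall>a\<in>Q. \<forall>b\<in>P. [a, b] \<doteq> [b, a]" using comm word_eq_sym by blast
  have "z \<in> P \<or> z \<in> Q" using PQ(1) by blast
  then show False
  proof
    assume "z \<in> P"
    then show False using no_split[OF PQ(1,2,4) _ comm] by blast
  next
    assume "z \<in> Q"
    moreover have "Q \<union> P = insert z Y" "Q \<inter> P = {}" using PQ(1,2) by auto
    ultimately show False using no_split[of Q P] PQ(3) comm' by blast
  qed
qed

lemma cox_irreducible_obtain_noncommuting:
  assumes "cox_irreducible I" "Y \<subseteq> I" "Y \<noteq> {}" "Y \<noteq> I"
  obtains a z where "a \<in> Y" "z \<in> I - Y" "\<not> [a, z] \<doteq> [z, a]"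
proof -
  have "Y \<union> (I - Y) = I" "Y \<inter> (I - Y) = {}" "I - Y \<noteq> {}" using assms(2,4) by auto
  then show ?thesis using assms(1,3) that unfolding cox_irreducible_def by blast
qed

text \<open>Take \<open>Y\<close> of maximal size: adding a generator that does not commute with \<open>Y\<close> would keep it
  irreducible and infinite.\<close>
lemma maximal_irreducible_infinite_exists:
  assumes J: "finite J" and Y0: "Y0 \<subseteq> J" "cox_irreducible Y0" "\<not> finite_parabolic Y0"
  obtains Y where "Y \<subseteq> J" "cox_irreducible Y" "\<not> finite_parabolic Y"
    "\<forall>a\<in>Y. \<forall>z\<in>J - Y. [a, z] \<doteq> [z, a]"
proof -
  let ?P = "\<lambda>Y. Y \<subseteq> J \<and> cox_irreducible Y \<and> \<not> finite_parabolic Y"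
  have "card Z < Suc (card J)" if "?P Z" for Z using that card_mono[OF J] by (simp add: less_Suc_eq_le)
  then obtain Y where Y: "?P Y" and max: "\<And>Z. ?P Z \<Longrightarrow> card Z \<le> card Y"
    using ex_has_greatest_nat[of ?P Y0 card "Suc (card J)"] Y0 by blast
  have "[a, z] \<doteq> [z, a]" if az: "a \<in> Y" "z \<in> J - Y" for a z
  proof (rule ccontr)
    assume "\<not> [a, z] \<doteq> [z, a]"
    then have "?P (insert z Y)"
      using Y az cox_irreducible_insert[of Y z a] finite_parabolic_mono[of Y "insert z Y"] by blast
    then have "card (insert z Y) \<le> card Y" by (rule max)
    moreover have "finite Y" using J Y finite_subset by blast
    ultimately show False using az(2) by simp
  qed
  then show ?thesis using that Y by blast
qed

text \<open>For \<open>K = I\<close>,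
  \<open>W\<^sub>J\<close> is infinite, so it has a maximal irreducible infinite \<open>Y \<subseteq> J\<close>; a generator
  \<open>z \<in> I - J\<close> not commuting with \<open>Y\<close> exists by irreducibility of \<open>I\<close>, and Kilmoyer's lemma
  makes \<open>W\<^bsub>J \<inter> C(z)\<^esub>\<close> of finite index in \<open>W\<^sub>J\<close>, forcing \<open>Y \<subseteq> C(z)\<close>.\<close>
lemma irreducible_infinite_subset_of_finite_index:
  "finite I \<Longrightarrow> I \<subseteq> S \<Longrightarrow> J \<subseteq> I \<Longrightarrow> finite_index I J \<Longrightarrow>
   K \<subseteq> I \<Longrightarrow> cox_irreducible K \<Longrightarrow> \<not> finite_parabolic K \<Longrightarrow> K \<subseteq> J"
proof (induction "card I" arbitrary: I J K rule: less_induct)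
  case less
  note I = less.prems(1,2) and J = less.prems(3,4) and K = less.prems(5-7)
  have JS: "J \<subseteq> S" and fJ: "finite J" using I J finite_subset by auto
  show ?case
  proof (cases "K = I")
    case False
    then have "card K < card I" using I K by (simp add: psubset_card_mono psubset_eq)
    moreover have "finite_index K (K \<inter> J)" by (rule finite_index_restrict[OF I(2) K(1) JS J(2)])
    moreover have "finite K" "K \<subseteq> S" using I K finite_subset by auto
    ultimately have "K \<subseteq> K \<inter> J" using less.hyps[OF _ _ _ Int_lower1 _ order_refl K(2,3)] by blast
    then show ?thesis by blast
  next
    case True
    show ?thesis
    proof (rule ccontr)
      assume "\<not> K \<subseteq> J"
      then have JI: "J \<subset> I" using True J by auto
      have "\<not> finite_parabolic J" using finite_parabolic_if_finite_index[OF I(2) JS J(2)] K(3) True by blast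
      then obtain Y0 where "Y0 \<subseteq> J" "cox_irreducible Y0" "\<not> finite_parabolic Y0"
        using finite_parabolic_if_irreducible_finite[OF fJ JS] by blast
      then obtain Y where Y: "Y \<subseteq> J" "cox_irreducible Y" "\<not> finite_parabolic Y"
        and Ycomm: "\<forall>a\<in>Y. \<forall>z\<in>J - Y. [a, z] \<doteq> [z, a]"
        using maximal_irreducible_infinite_exists[OF fJ] by blast
      have "Y \<noteq> {}" using Y(3) finite_parabolic_empty by auto
      then obtain a z where az: "a \<in> Y" "z \<in> I - Y" "\<not> [a, z] \<doteq> [z, a]"
        using cox_irreducible_obtain_noncommuting[of I Y] K(2) True Y(1) JI by blast
      then have "z \<notin> J" using Ycomm by blast
      then have "finite_index J (commuting_gens J z)"
        using finite_index_commuting_gens[OF I(2) J(1) _ _ J(2)] az by blast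
      moreover have "card J < card I" using I(1) JI by (simp add: psubset_card_mono)
      ultimately have "Y \<subseteq> commuting_gens J z"
        using less.hyps[OF _ fJ JS] Y by (auto simp: commuting_gens_def)
      then show False using az by (auto simp: commuting_gens_def)
    qed
  qed
qed

section \<open>Words and the Coxeter group\<close>

lemma carrier_coxeter_group: "carrier (coxeter_group M S) = elt ` lists S"
  by (auto simp: coxeter_group_def quotient_def elt_def)

lemma word_eq_some_elt: "a \<in> lists S \<Longrightarrow> a \<doteq> (SOME u. u \<in> elt a)"
proof -
  assume a: "a \<in> lists S"
  have "a \<in> elt a" using a elt_mem_iff word_eq_refl by blast
  then have "(SOME u. u \<in> elt a) \<in> elt a" by (rule someI)
  then show ?thesis using elt_mem_iff by blast
qed

lemma mult_coxeter_group: "a \<in> lists S \<Longrightarrow> b \<in> lists S \<Longrightarrow> elt a \<otimes>\<^bsub>coxeter_group M S\<^esub> elt b = elt (a @ b)"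
proof -
  assume a: "a \<in> lists S" and b: "b \<in> lists S"
  have "a @ b \<doteq> (SOME u. u \<in> elt a) @ (SOME v. v \<in> elt b)"
    using word_eq_append[OF word_eq_some_elt[OF a] word_eq_some_elt[OF b]] .
  then have "elt ((SOME u. u \<in> elt a) @ (SOME v. v \<in> elt b)) = elt (a @ b)"
    using elt_eqI word_eq_sym by metis
  then show ?thesis by (simp add: coxeter_group_def elt_def)
qed

lemma one_coxeter_group: "\<one>\<^bsub>coxeter_group M S\<^esub> = elt []"
  by (simp add: coxeter_group_def elt_def)

lemma group_coxeter_group: "group (coxeter_group M S)"
proof (rule groupI)
  let ?G = "coxeter_group M S"
  fix x y assume "x \<in> carrier ?G" "y \<in> carrier ?G"
  then obtain a b where "a \<in> lists S" "b \<in> lists S" "x = elt a" "y = elt b" by (auto simp: carrier_coxeter_group)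
  then show "x \<otimes>\<^bsub>?G\<^esub> y \<in> carrier ?G" by (simp add: mult_coxeter_group carrier_coxeter_group)
next
  show "\<one>\<^bsub>coxeter_group M S\<^esub> \<in> carrier (coxeter_group M S)" by (auto simp: one_coxeter_group carrier_coxeter_group)
next
  let ?G = "coxeter_group M S"
  fix x y z assume "x \<in> carrier ?G" "y \<in> carrier ?G" "z \<in> carrier ?G"
  then obtain a b c where "a \<in> lists S" "b \<in> lists S" "c \<in> lists S" "x = elt a" "y = elt b" "z = elt c"
    by (auto simp: carrier_coxeter_group)
  then show "x \<otimes>\<^bsub>?G\<^esub> y \<otimes>\<^bsub>?G\<^esub> z = x \<otimes>\<^bsub>?G\<^esub> (y \<otimes>\<^bsub>?G\<^esub> z)" by (simp add: mult_coxeter_group)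
next
  let ?G = "coxeter_group M S"
  fix x assume "x \<in> carrier ?G"
  then obtain a where "a \<in> lists S" "x = elt a" by (auto simp: carrier_coxeter_group)
  then show "\<one>\<^bsub>?G\<^esub> \<otimes>\<^bsub>?G\<^esub> x = x" by (simp add: mult_coxeter_group one_coxeter_group)
next
  let ?G = "coxeter_group M S"
  fix x assume "x \<in> carrier ?G"
  then obtain a where a: "a \<in> lists S" "x = elt a" by (auto simp: carrier_coxeter_group)
  have "elt (rev a) \<otimes>\<^bsub>?G\<^esub> x = elt (rev a @ a)" using a by (simp add: mult_coxeter_group)
  also have "\<dots> = elt []" using elt_eqI[OF rev_append_word_eq_Nil[OF a(1)]] .
  finally show "\<exists>y\<in>carrier ?G. y \<otimes>\<^bsub>?G\<^esub> x = \<one>\<^bsub>?G\<^esub>"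
    using a by (intro bexI[of _ "elt (rev a)"]) (auto simp: one_coxeter_group carrier_coxeter_group)
qed

lemma inv_coxeter_group: "a \<in> lists S \<Longrightarrow> inv\<^bsub>coxeter_group M S\<^esub> (elt a) = elt (rev a)"
proof -
  assume a: "a \<in> lists S"
  have "elt (rev a) \<otimes>\<^bsub>coxeter_group M S\<^esub> elt a = \<one>\<^bsub>coxeter_group M S\<^esub>"
    using a elt_eqI[OF rev_append_word_eq_Nil[OF a]] by (simp add: mult_coxeter_group one_coxeter_group)
  then show ?thesis using group.inv_equality[OF group_coxeter_group] a by (auto simp: carrier_coxeter_group)
qed

lemma cox_gen_eq_elt: "cox_gen M S i = elt [i]"
  by (simp add: cox_gen_def elt_def)

lemma generate_coxeter_group_subset:
  assumes A: "A \<subseteq> S"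
  shows "generate (coxeter_group M S) (cox_gen M S ` A) \<subseteq> elt ` lists A"
proof
  fix x assume "x \<in> generate (coxeter_group M S) (cox_gen M S ` A)"
  then show "x \<in> elt ` lists A"
  proof (induction rule: generate.induct)
    case one then show ?case by (auto simp: one_coxeter_group)
  next
    case (incl h) then show ?case by (auto simp: cox_gen_eq_elt)
  next
    case (inv h)
    then obtain i where "i \<in> A" "h = elt [i]" by (auto simp: cox_gen_eq_elt)
    then show ?case using inv_coxeter_group[of "[i]"] A by auto
  next
    case (eng h1 h2)
    then obtain a b where "a \<in> lists A" "b \<in> lists A" "h1 = elt a" "h2 = elt b" by blast
    moreover have "a \<in> lists S" "b \<in> lists S" using calculation A by auto
    ultimately show ?case by (auto simp: mult_coxeter_group)
  qed
qed

lemma elt_in_generate_coxeter_group: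
  assumes A: "A \<subseteq> S"
  shows "a \<in> lists A \<Longrightarrow> elt a \<in> generate (coxeter_group M S) (cox_gen M S ` A)"
proof (induction a)
  case Nil then show ?case using generate.one[of "coxeter_group M S"] by (simp add: one_coxeter_group)
next
  case (Cons i a)
  have "elt [i] \<in> generate (coxeter_group M S) (cox_gen M S ` A)"
    using Cons(2) by (intro generate.incl) (auto simp: cox_gen_eq_elt)
  then have "elt [i] \<otimes>\<^bsub>coxeter_group M S\<^esub> elt a \<in> generate (coxeter_group M S) (cox_gen M S ` A)"
    using Cons generate.eng by auto
  moreover have "i \<in> S" "a \<in> lists S" using Cons A by auto
  ultimately show ?case using mult_coxeter_group[of "[i]" a] by simp
qed

lemma generate_coxeter_group: "A \<subseteq> S \<Longrightarrow> generate (coxeter_group M S) (cox_gen M S ` A) = elt ` lists A"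
  using generate_coxeter_group_subset elt_in_generate_coxeter_group by blast

lemma pcoset_eq_Union_rcoset: "J \<subseteq> S \<Longrightarrow> g \<in> lists S \<Longrightarrow>
   pcoset J g = \<Union> ((elt ` lists J) #>\<^bsub>coxeter_group M S\<^esub> elt g)"
proof -
  assume J: "J \<subseteq> S" and g: "g \<in> lists S"
  have m: "elt a \<otimes>\<^bsub>coxeter_group M S\<^esub> elt g = elt (a @ g)" if "a \<in> lists J" for a
  proof -
    have "a \<in> lists S" using that J by auto
    then show ?thesis using mult_coxeter_group g by simp
  qed
  have "(elt ` lists J) #>\<^bsub>coxeter_group M S\<^esub> elt g = (\<lambda>a. elt (a @ g)) ` lists J"
    unfolding r_coset_def using m by auto
  then show ?thesis unfolding pcoset_def by (auto simp: elt_mem_iff)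
qed

lemma finite_index_if_finite_rcosets:
  assumes J: "J \<subseteq> S" and fin: "finite (rcosets\<^bsub>coxeter_group M S\<^esub> (elt ` lists J))"
  shows "finite_index S J"
proof -
  have "pcoset J ` lists S \<subseteq> Union ` (rcosets\<^bsub>coxeter_group M S\<^esub> (elt ` lists J))"
  proof
    fix x assume "x \<in> pcoset J ` lists S"
    then obtain g where g: "g \<in> lists S" "x = pcoset J g" by blast
    have "(elt ` lists J) #>\<^bsub>coxeter_group M S\<^esub> elt g \<in> rcosets\<^bsub>coxeter_group M S\<^esub> (elt ` lists J)"
      unfolding RCOSETS_def using g by (auto simp: carrier_coxeter_group)
    then show "x \<in> Union ` (rcosets\<^bsub>coxeter_group M S\<^esub> (elt ` lists J))"
      using pcoset_eq_Union_rcoset[OF J g(1)] g by blast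
  qed
  then show ?thesis unfolding finite_index_def by (rule finite_subset[OF _ finite_imageI[OF fin]])
qed

lemma irreducible_if_indecomposable: "T \<subseteq> S \<Longrightarrow> \<not> cox_decomposable M S T \<Longrightarrow> cox_irreducible T"
proof -
  assume T: "T \<subseteq> S" and nd: "\<not> cox_decomposable M S T"
  show "cox_irreducible T" unfolding cox_irreducible_def
  proof
    assume "\<exists>P Q. P \<union> Q = T \<and> P \<inter> Q = {} \<and> P \<noteq> {} \<and> Q \<noteq> {} \<and> (\<forall>a\<in>P. \<forall>b\<in>Q. [a, b] \<doteq> [b, a])"
    then obtain P Q where PQ: "P \<union> Q = T" "P \<inter> Q = {}" "P \<noteq> {}" "Q \<noteq> {}" "\<forall>a\<in>P. \<forall>b\<in>Q. [a, b] \<doteq> [b, a]"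
      by blast
    have "\<forall>a\<in>P. \<forall>b\<in>Q. cox_gen M S a \<otimes>\<^bsub>coxeter_group M S\<^esub> cox_gen M S b
                     = cox_gen M S b \<otimes>\<^bsub>coxeter_group M S\<^esub> cox_gen M S a"
    proof (intro ballI)
      fix a b assume ab: "a \<in> P" "b \<in> Q"
      then have abS: "a \<in> S" "b \<in> S" using PQ T by auto
      have "elt [a, b] = elt [b, a]" using elt_eqI PQ(5) ab by blast
      then show "cox_gen M S a \<otimes>\<^bsub>coxeter_group M S\<^esub> cox_gen M S b
                     = cox_gen M S b \<otimes>\<^bsub>coxeter_group M S\<^esub> cox_gen M S a"
        using mult_coxeter_group[of "[a]" "[b]"] mult_coxeter_group[of "[b]" "[a]"] abS
        by (simp add: cox_gen_eq_elt)
    qed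
    then show False using nd PQ unfolding cox_decomposable_def by blast
  qed
qed

end

theorem corollary3p2:
  fixes M :: "nat \<Rightarrow> nat \<Rightarrow> enat" and k l m :: nat
  defines "G \<equiv> coxeter_group M {..k}"
  assumes cox: "coxeter_matrix M {..k}"
    and G_inf: "infinite (carrier G)"
    and lk: "l \<le> k"
    and Gl_inf: "infinite (generate G (cox_gen M {..k} ` {..l}))"
    and Gl_indec: "\<not> cox_decomposable M {..k} {..l}"
    and m_pos: "0 < m" and mk: "m \<le> k"
  shows "infinite (rcosets\<^bsub>G\<^esub> (generate G (cox_gen M {..k} ` {m..k})))"
proof
  interpret coxeter_system M "{..k}" by (rule coxeter_system.intro[OF cox])
  have J: "{m..k} \<subseteq> {..k}" and L: "{..l} \<subseteq> {..k}" using lk by auto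
  assume "finite (rcosets\<^bsub>G\<^esub> (generate G (cox_gen M {..k} ` {m..k})))"
  then have "finite_index {..k} {m..k}"
    using finite_index_if_finite_rcosets[OF J] generate_coxeter_group[OF J] by (simp add: G_def)
  moreover have "cox_irreducible {..l}" using irreducible_if_indecomposable[OF L Gl_indec] .
  moreover have "\<not> finite_parabolic {..l}"
    using Gl_inf generate_coxeter_group[OF L] by (simp add: G_def finite_parabolic_def)
  ultimately have "{..l} \<subseteq> {m..k}"
    using irreducible_infinite_subset_of_finite_index[OF _ order_refl J _ L] by simp
  then show False using m_pos by auto
qed

end
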